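(* The set $\{[L,l] : (L,l)\text{ a pointed image-finite labelled transition system}\}$ is a subset of $\mathbb{X}=\max(\mathbb{D})$ and is dense in $(\mathbb{X},\tau_{\mathbb{X}})$.
   Context: Fix a finite set $\mathrm{Act}$ of events. A mixed transition system is $M=(\Sigma,R^a,R^c)$ with $R^a,R^c\subseteq\Sigma\times\mathrm{Act}\times\Sigma$; it is a modal transition system if $R^a\subseteq R^c$; a labelled transition system $(\Sigma,R)$ is identified with $(\Sigma,R,R)$. $M$ is image-finite if for all $s,\alpha$ and $m\in\{a,c\}$ the set $\{s' : (s,\alpha,s')\in R^m\}$ is finite; pointed systems have a designated state. A relation $Q\subseteq\Sigma\times\Sigma$ is a refinement within $M$ if $(s,t)\in Q$ implies, for all $\alpha$: (i) whenever $(s,\alpha,s')\in R^a$ there is $(t,\alpha,t')\in R^a$ with $(s',t')\in Q$; (ii) whenever $(t,\alpha,t')\in R^c$ there is $(s,\alpha,s')\in R^c$ with $(s',t')\in Q$. For pointed systems, $(N,j)$ refines $(M,i)$ if some refinement within the disjoint union contains $(i,j)$; refinement-equivalent means both directions. Domain theory: $K(D)$ denotes compact elements of a dcpo; bifinite (SFP) domains are algebraic dcpos where, for finite $F\subseteq K(D)$, iterated minimal-upper-bound sets are finite and in $K(D)$ and every upper bound of $F$ is above a minimal upper bound. Scott topology: sets $U={\uparrow}(U\cap K(D))$; Lawson topology generated by ${\uparrow}k\setminus{\uparrow}l$, $k,l\in K(D)$. Mixed powerdomain $\mathcal{M}(D)$: pairs $(L,U)$, $L$ Scott-closed, $U$ Lawson-closed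 upper, $L={\downarrow}(L\cap U)$, ordered by $L\subseteq L'$ and $U'\subseteq U$. $\mathbb{D}$ is the initial solution over bifinite domains of $\mathbb{D}\cong\prod_{\alpha\in\mathrm{Act}}\mathcal{M}(\mathbb{D})$, $d=((L^d_\alpha,U^d_\alpha))_\alpha$, viewed as the mixed transition system with $(d,\alpha,d')\in\mathbb{R}^a$ iff $d'\in L^d_\alpha$ and $(d,\alpha,d')\in\mathbb{R}^c$ iff $d'\in U^d_\alpha$; its order equals the greatest refinement relation within this system. $\mathbb{X}=\max(\mathbb{D})$, $\tau_{\mathbb{X}}=\{U\cap\mathbb{X} : U\text{ Scott-open}\}$. For each image-finite pointed modal transition system $(M,i)$, $[M,i]$ denotes the unique element of $\mathbb{D}$ such that $(\mathbb{D},[M,i])$ and $(M,i)$ are refinement-equivalent. *)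

theory Defs
  imports Main
begin

type_synonym ('s,'act) mts = "'s set \<times> ('s \<times> 'act \<times> 's) set \<times> ('s \<times> 'act \<times> 's) set"

definition refinement :: "('s,'act) mts \<Rightarrow> ('s \<times> 's) set \<Rightarrow> bool" where
  "refinement M Q \<longleftrightarrow> (case M of (\<Sigma>, Ra, Rc) \<Rightarrow>
     Q \<subseteq> \<Sigma> \<times> \<Sigma> \<and>
     (\<forall>(s,t)\<in>Q. \<forall>\<alpha>.
        (\<forall>s'. (s,\<alpha>,s') \<in> Ra \<longrightarrow> (\<exists>t'. (t,\<alpha>,t') \<in> Ra \<and> (s',t') \<in> Q)) \<and>
        (\<forall>t'. (t,\<alpha>,t') \<in> Rc \<longrightarrow> (\<exists>s'. (s,\<alpha>,s') \<in> Rc \<and> (s',t') \<in> Q))))"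

definition dunion :: "('a,'act) mts \<Rightarrow> ('b,'act) mts \<Rightarrow> ('a + 'b,'act) mts" where
  "dunion M N = (case M of (\<Sigma>1, Ra1, Rc1) \<Rightarrow> case N of (\<Sigma>2, Ra2, Rc2) \<Rightarrow>
     (Inl ` \<Sigma>1 \<union> Inr ` \<Sigma>2,
      (\<lambda>(s,a,t). (Inl s, a, Inl t)) ` Ra1 \<union> (\<lambda>(s,a,t). (Inr s, a, Inr t)) ` Ra2,
      (\<lambda>(s,a,t). (Inl s, a, Inl t)) ` Rc1 \<union> (\<lambda>(s,a,t). (Inr s, a, Inr t)) ` Rc2))"

text \<open>(N,j) refines (M,i)\<close>
definition refines :: "('a,'act) mts \<Rightarrow> 'a \<Rightarrow> ('b,'act) mts \<Rightarrow> 'b \<Rightarrow> bool" where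
  "refines M i N j \<longleftrightarrow> (\<exists>Q. refinement (dunion M N) Q \<and> (Inl i, Inr j) \<in> Q)"

definition ref_equiv :: "('a,'act) mts \<Rightarrow> 'a \<Rightarrow> ('b,'act) mts \<Rightarrow> 'b \<Rightarrow> bool" where
  "ref_equiv M i N j \<longleftrightarrow> refines M i N j \<and> refines N j M i"

definition lts :: "'s set \<Rightarrow> ('s \<times> 'act \<times> 's) set \<Rightarrow> ('s,'act) mts" where
  "lts \<Sigma> R = (\<Sigma>, R, R)"

definition lts_wf :: "'s set \<Rightarrow> ('s \<times> 'act \<times> 's) set \<Rightarrow> bool" where
  "lts_wf \<Sigma> R \<longleftrightarrow> R \<subseteq> \<Sigma> \<times> UNIV \<times> \<Sigma>"

definition image_finite :: "('s,'act) mts \<Rightarrow> bool" where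
  "image_finite M \<longleftrightarrow> (case M of (\<Sigma>, Ra, Rc) \<Rightarrow>
     (\<forall>s \<alpha>. finite {s'. (s,\<alpha>,s') \<in> Ra} \<and> finite {s'. (s,\<alpha>,s') \<in> Rc}))"

definition po_on :: "'d set \<Rightarrow> ('d \<Rightarrow> 'd \<Rightarrow> bool) \<Rightarrow> bool" where
  "po_on D le \<longleftrightarrow> (\<forall>x\<in>D. le x x) \<and> (\<forall>x\<in>D. \<forall>y\<in>D. le x y \<and> le y x \<longrightarrow> x = y)
     \<and> (\<forall>x\<in>D. \<forall>y\<in>D. \<forall>z\<in>D. le x y \<and> le y z \<longrightarrow> le x z)"

definition up :: "'d set \<Rightarrow> ('d \<Rightarrow> 'd \<Rightarrow> bool) \<Rightarrow> 'd set \<Rightarrow> 'd set" where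
  "up D le X = {y\<in>D. \<exists>x\<in>X. le x y}"

definition down :: "'d set \<Rightarrow> ('d \<Rightarrow> 'd \<Rightarrow> bool) \<Rightarrow> 'd set \<Rightarrow> 'd set" where
  "down D le X = {y\<in>D. \<exists>x\<in>X. le y x}"

definition directed :: "'d set \<Rightarrow> ('d \<Rightarrow> 'd \<Rightarrow> bool) \<Rightarrow> 'd set \<Rightarrow> bool" where
  "directed D le S \<longleftrightarrow> S \<subseteq> D \<and> S \<noteq> {} \<and> (\<forall>x\<in>S. \<forall>y\<in>S. \<exists>z\<in>S. le x z \<and> le y z)"

definition upper_bounds :: "'d set \<Rightarrow> ('d \<Rightarrow> 'd \<Rightarrow> bool) \<Rightarrow> 'd set \<Rightarrow> 'd set" where
  "upper_bounds D le S = {u\<in>D. \<forall>x\<in>S. le x u}"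

definition is_lub :: "'d set \<Rightarrow> ('d \<Rightarrow> 'd \<Rightarrow> bool) \<Rightarrow> 'd set \<Rightarrow> 'd \<Rightarrow> bool" where
  "is_lub D le S s \<longleftrightarrow> s \<in> upper_bounds D le S \<and> (\<forall>u\<in>upper_bounds D le S. le s u)"

definition dcpo :: "'d set \<Rightarrow> ('d \<Rightarrow> 'd \<Rightarrow> bool) \<Rightarrow> bool" where
  "dcpo D le \<longleftrightarrow> po_on D le \<and> (\<forall>S. directed D le S \<longrightarrow> (\<exists>s. is_lub D le S s))"

definition compacts :: "'d set \<Rightarrow> ('d \<Rightarrow> 'd \<Rightarrow> bool) \<Rightarrow> 'd set" where
  "compacts D le = {k\<in>D. \<forall>S s. directed D le S \<and> is_lub D le S s \<and> le k s \<longrightarrow> (\<exists>x\<in>S. le k x)}"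

definition algebraic :: "'d set \<Rightarrow> ('d \<Rightarrow> 'd \<Rightarrow> bool) \<Rightarrow> bool" where
  "algebraic D le \<longleftrightarrow> dcpo D le \<and>
     (\<forall>x\<in>D. directed D le {k\<in>compacts D le. le k x} \<and> is_lub D le {k\<in>compacts D le. le k x} x)"

definition mub :: "'d set \<Rightarrow> ('d \<Rightarrow> 'd \<Rightarrow> bool) \<Rightarrow> 'd set \<Rightarrow> 'd set" where
  "mub D le F = {u\<in>upper_bounds D le F. \<forall>v\<in>upper_bounds D le F. le v u \<longrightarrow> v = u}"

definition mub_step :: "'d set \<Rightarrow> ('d \<Rightarrow> 'd \<Rightarrow> bool) \<Rightarrow> 'd set \<Rightarrow> 'd set" where
  "mub_step D le F = \<Union>{mub D le G | G. G \<subseteq> F \<and> finite G}"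

definition mub_closure :: "'d set \<Rightarrow> ('d \<Rightarrow> 'd \<Rightarrow> bool) \<Rightarrow> 'd set \<Rightarrow> 'd set" where
  "mub_closure D le F = (\<Union>n. (mub_step D le ^^ n) F)"

definition bifinite :: "'d set \<Rightarrow> ('d \<Rightarrow> 'd \<Rightarrow> bool) \<Rightarrow> bool" where
  "bifinite D le \<longleftrightarrow> algebraic D le \<and>
     (\<forall>F. finite F \<and> F \<subseteq> compacts D le \<longrightarrow>
        finite (mub_closure D le F) \<and> mub_closure D le F \<subseteq> compacts D le \<and>
        (\<forall>u\<in>upper_bounds D le F. \<exists>m\<in>mub D le F. le m u))"

definition scott_open :: "'d set \<Rightarrow> ('d \<Rightarrow> 'd \<Rightarrow> bool) \<Rightarrow> 'd set \<Rightarrow> bool" where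
  "scott_open D le U \<longleftrightarrow> U \<subseteq> D \<and> U = up D le (U \<inter> compacts D le)"

definition scott_closed :: "'d set \<Rightarrow> ('d \<Rightarrow> 'd \<Rightarrow> bool) \<Rightarrow> 'd set \<Rightarrow> bool" where
  "scott_closed D le C \<longleftrightarrow> C \<subseteq> D \<and> scott_open D le (D - C)"

definition scott_closure :: "'d set \<Rightarrow> ('d \<Rightarrow> 'd \<Rightarrow> bool) \<Rightarrow> 'd set \<Rightarrow> 'd set" where
  "scott_closure D le X = \<Inter>{C. scott_closed D le C \<and> X \<subseteq> C}"

definition lawson_subbasis :: "'d set \<Rightarrow> ('d \<Rightarrow> 'd \<Rightarrow> bool) \<Rightarrow> 'd set set" where
  "lawson_subbasis D le = {up D le {k} - up D le {l} | k l. k \<in> compacts D le \<and> l \<in> compacts D le}"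

definition lawson_open :: "'d set \<Rightarrow> ('d \<Rightarrow> 'd \<Rightarrow> bool) \<Rightarrow> 'd set \<Rightarrow> bool" where
  "lawson_open D le U \<longleftrightarrow> U \<subseteq> D \<and>
     (\<forall>x\<in>U. \<exists>F. finite F \<and> F \<subseteq> lawson_subbasis D le \<and> x \<in> D \<inter> \<Inter>F \<and> D \<inter> \<Inter>F \<subseteq> U)"

definition lawson_closed :: "'d set \<Rightarrow> ('d \<Rightarrow> 'd \<Rightarrow> bool) \<Rightarrow> 'd set \<Rightarrow> bool" where
  "lawson_closed D le C \<longleftrightarrow> C \<subseteq> D \<and> lawson_open D le (D - C)"

definition upper_set :: "'d set \<Rightarrow> ('d \<Rightarrow> 'd \<Rightarrow> bool) \<Rightarrow> 'd set \<Rightarrow> bool" where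
  "upper_set D le U \<longleftrightarrow> U \<subseteq> D \<and> up D le U = U"

definition mixed_pd :: "'d set \<Rightarrow> ('d \<Rightarrow> 'd \<Rightarrow> bool) \<Rightarrow> ('d set \<times> 'd set) set" where
  "mixed_pd D le = {(L,U). scott_closed D le L \<and> lawson_closed D le U \<and> upper_set D le U
                          \<and> L = down D le (L \<inter> U)}"

definition scott_continuous :: "'d set \<Rightarrow> ('d \<Rightarrow> 'd \<Rightarrow> bool) \<Rightarrow> ('d \<Rightarrow> 'd) \<Rightarrow> bool" where
  "scott_continuous D le g \<longleftrightarrow> g ` D \<subseteq> D \<and> (\<forall>x\<in>D. \<forall>y\<in>D. le x y \<longrightarrow> le (g x) (g y)) \<and>
     (\<forall>S s. directed D le S \<and> is_lub D le S s \<longrightarrow> is_lub D le (g ` S) (g s))"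

definition mixed_map :: "'d set \<Rightarrow> ('d \<Rightarrow> 'd \<Rightarrow> bool) \<Rightarrow> ('d \<Rightarrow> 'd) \<Rightarrow> 'd set \<times> 'd set \<Rightarrow> 'd set \<times> 'd set" where
  "mixed_map D le g p = (scott_closure D le (g ` fst p), up D le (g ` snd p))"

definition Phi :: "'d set \<Rightarrow> ('d \<Rightarrow> 'd \<Rightarrow> bool) \<Rightarrow> ('d \<Rightarrow> ('act \<Rightarrow> 'd set \<times> 'd set))
                   \<Rightarrow> ('d \<Rightarrow> 'd) \<Rightarrow> 'd \<Rightarrow> 'd" where
  "Phi D le \<iota> g x = inv_into D \<iota> (\<lambda>\<alpha>. mixed_map D le g (\<iota> x \<alpha>))"

text \<open>(D, le, \<iota>) is the initial solution over bifinite domains of D \<cong> \<Prod>\<alpha>\<in>Act. M(D):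
  D bifinite, \<iota> an order isomorphism onto the product, and initiality expressed as
  the minimal invariant property: the identity is the least fixed point of Phi among
  Scott-continuous endomaps of D.\<close>
definition initial_solution :: "'d set \<Rightarrow> ('d \<Rightarrow> 'd \<Rightarrow> bool) \<Rightarrow> ('d \<Rightarrow> ('act \<Rightarrow> 'd set \<times> 'd set)) \<Rightarrow> bool" where
  "initial_solution D le \<iota> \<longleftrightarrow>
     bifinite D le \<and>
     bij_betw \<iota> D {p. \<forall>\<alpha>. p \<alpha> \<in> mixed_pd D le} \<and>
     (\<forall>x\<in>D. \<forall>y\<in>D. le x y \<longleftrightarrow>
         (\<forall>\<alpha>. fst (\<iota> x \<alpha>) \<subseteq> fst (\<iota> y \<alpha>) \<and> snd (\<iota> y \<alpha>) \<subseteq> snd (\<iota> x \<alpha>))) \<and>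
     (\<forall>g. scott_continuous D le g \<and> (\<forall>x\<in>D. Phi D le \<iota> g x = g x) \<longrightarrow> (\<forall>x\<in>D. le x (g x)))"

definition dsys :: "'d set \<Rightarrow> ('d \<Rightarrow> ('act \<Rightarrow> 'd set \<times> 'd set)) \<Rightarrow> ('d,'act) mts" where
  "dsys D \<iota> = (D, {(d,\<alpha>,d'). d \<in> D \<and> d' \<in> fst (\<iota> d \<alpha>)}, {(d,\<alpha>,d'). d \<in> D \<and> d' \<in> snd (\<iota> d \<alpha>)})"

text \<open>[M,i]: the unique element of D refinement-equivalent to (M,i).\<close>
definition bracket :: "'d set \<Rightarrow> ('d \<Rightarrow> ('act \<Rightarrow> 'd set \<times> 'd set)) \<Rightarrow> ('s,'act) mts \<Rightarrow> 's \<Rightarrow> 'd" where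
  "bracket D \<iota> M i = (THE d. d \<in> D \<and> ref_equiv (dsys D \<iota>) d M i)"

definition maximals :: "'d set \<Rightarrow> ('d \<Rightarrow> 'd \<Rightarrow> bool) \<Rightarrow> 'd set" where
  "maximals D le = {x\<in>D. \<forall>y\<in>D. le x y \<longrightarrow> y = x}"

end

theory Submission
  imports Defs "HOL-Library.Countable_Set"
begin

text \<open>Every element x of D is the least upper bound of its approximations approx n x, which cut x
  off at depth n: the pointwise lub of the approximation maps is a continuous fixed point of the
  functor defining D, so by initiality it is the identity. The same approximations turn a refinement
  relation within D into the order of D (coinduction). An image-finite labelled transition system
  denotes the lub of its finite unfoldings, an element whose may- and must-successors are generated
  by the same elements, and coinduction shows that such an element is maximal. For density, the
  approximations of all elements, arranged by depth, form a countable image-finite transition system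
  in which the state (n, approx n x) denotes an element above approx n x; a Scott-open set containing
  x contains a compact element below some approx n x, and hence that element.\<close>

section \<open>Transition systems\<close>

definition succs :: "('s \<times> 'act \<times> 's) set \<Rightarrow> 's \<Rightarrow> 'act \<Rightarrow> 's set" where
  "succs R s \<alpha> = {s'. (s, \<alpha>, s') \<in> R}"

lemma image_finite_lts_iff: "image_finite (lts \<Sigma> R) \<longleftrightarrow> (\<forall>s \<alpha>. finite (succs R s \<alpha>))"
  unfolding image_finite_def lts_def succs_def by simp

definition refinement_between :: "('a,'act) mts \<Rightarrow> ('b,'act) mts \<Rightarrow> ('a \<times> 'b) set \<Rightarrow> bool" where
  "refinement_between M N Q \<longleftrightarrow> (case M of (\<Sigma>M, RaM, RcM) \<Rightarrow> case N of (\<Sigma>N, RaN, RcN) \<Rightarrow>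
     Q \<subseteq> \<Sigma>M \<times> \<Sigma>N \<and>
     (\<forall>(s,t)\<in>Q. \<forall>\<alpha>.
        (\<forall>s'. (s,\<alpha>,s') \<in> RaM \<longrightarrow> (\<exists>t'. (t,\<alpha>,t') \<in> RaN \<and> (s',t') \<in> Q)) \<and>
        (\<forall>t'. (t,\<alpha>,t') \<in> RcN \<longrightarrow> (\<exists>s'. (s,\<alpha>,s') \<in> RcM \<and> (s',t') \<in> Q))))"

lemma refinement_betweenI:
  assumes "Q \<subseteq> \<Sigma>M \<times> \<Sigma>N"
    and "\<And>s t \<alpha> s'. (s,t) \<in> Q \<Longrightarrow> (s,\<alpha>,s') \<in> RaM \<Longrightarrow> \<exists>t'. (t,\<alpha>,t') \<in> RaN \<and> (s',t') \<in> Q"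
    and "\<And>s t \<alpha> t'. (s,t) \<in> Q \<Longrightarrow> (t,\<alpha>,t') \<in> RcN \<Longrightarrow> \<exists>s'. (s,\<alpha>,s') \<in> RcM \<and> (s',t') \<in> Q"
  shows "refinement_between (\<Sigma>M, RaM, RcM) (\<Sigma>N, RaN, RcN) Q"
  using assms unfolding refinement_between_def by auto

lemma refinement_betweenD:
  assumes "refinement_between (\<Sigma>M, RaM, RcM) (\<Sigma>N, RaN, RcN) Q" and "(s,t) \<in> Q"
  shows "s \<in> \<Sigma>M" "t \<in> \<Sigma>N"
    and "(s,\<alpha>,s') \<in> RaM \<Longrightarrow> \<exists>t'. (t,\<alpha>,t') \<in> RaN \<and> (s',t') \<in> Q"
    and "(t,\<alpha>,t') \<in> RcN \<Longrightarrow> \<exists>s'. (s,\<alpha>,s') \<in> RcM \<and> (s',t') \<in> Q"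
  using assms unfolding refinement_between_def by auto

lemma refinementI:
  assumes "Q \<subseteq> \<Sigma> \<times> \<Sigma>"
    and "\<And>s t \<alpha> s'. (s,t) \<in> Q \<Longrightarrow> (s,\<alpha>,s') \<in> Ra \<Longrightarrow> \<exists>t'. (t,\<alpha>,t') \<in> Ra \<and> (s',t') \<in> Q"
    and "\<And>s t \<alpha> t'. (s,t) \<in> Q \<Longrightarrow> (t,\<alpha>,t') \<in> Rc \<Longrightarrow> \<exists>s'. (s,\<alpha>,s') \<in> Rc \<and> (s',t') \<in> Q"
  shows "refinement (\<Sigma>, Ra, Rc) Q"
  using assms unfolding refinement_def by auto

lemma refinementD:
  assumes "refinement (\<Sigma>, Ra, Rc) Q"
  shows "Q \<subseteq> \<Sigma> \<times> \<Sigma>"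
    and "(s,t) \<in> Q \<Longrightarrow> (s,\<alpha>,s') \<in> Ra \<Longrightarrow> \<exists>t'. (t,\<alpha>,t') \<in> Ra \<and> (s',t') \<in> Q"
    and "(s,t) \<in> Q \<Longrightarrow> (t,\<alpha>,t') \<in> Rc \<Longrightarrow> \<exists>s'. (s,\<alpha>,s') \<in> Rc \<and> (s',t') \<in> Q"
  using assms unfolding refinement_def by auto

lemma dunion_eq:
  "dunion (\<Sigma>M, RaM, RcM) (\<Sigma>N, RaN, RcN) =
     (Inl ` \<Sigma>M \<union> Inr ` \<Sigma>N,
      (\<lambda>(s,a,t). (Inl s, a, Inl t)) ` RaM \<union> (\<lambda>(s,a,t). (Inr s, a, Inr t)) ` RaN,
      (\<lambda>(s,a,t). (Inl s, a, Inl t)) ` RcM \<union> (\<lambda>(s,a,t). (Inr s, a, Inr t)) ` RcN)"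
  unfolding dunion_def by simp

lemma mem_image_Inl_transitions:
  "(x, \<alpha>, y) \<in> (\<lambda>(s,a,t). (Inl s, a, Inl t)) ` X \<longleftrightarrow> (\<exists>s t. x = Inl s \<and> y = Inl t \<and> (s,\<alpha>,t) \<in> X)"
  by force

lemma mem_image_Inr_transitions:
  "(x, \<alpha>, y) \<in> (\<lambda>(s,a,t). (Inr s, a, Inr t)) ` X \<longleftrightarrow> (\<exists>s t. x = Inr s \<and> y = Inr t \<and> (s,\<alpha>,t) \<in> X)"
  by force

lemmas mem_image_transitions = mem_image_Inl_transitions mem_image_Inr_transitions

lemma refinement_between_of_refinement:
  assumes Q: "refinement (dunion (\<Sigma>M, RaM, RcM) (\<Sigma>N, RaN, RcN)) Q"
  shows "refinement_between (\<Sigma>M, RaM, RcM) (\<Sigma>N, RaN, RcN) {(s, t). (Inl s, Inr t) \<in> Q}"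
    (is "refinement_between _ _ ?Q")
proof -
  note Q = Q[unfolded dunion_eq]
  show ?thesis
  proof (rule refinement_betweenI)
    show "?Q \<subseteq> \<Sigma>M \<times> \<Sigma>N" using refinementD(1)[OF Q] by force
  next
    fix s t \<alpha> s' assume st: "(s, t) \<in> ?Q" and s': "(s, \<alpha>, s') \<in> RaM"
    have "(Inl s, \<alpha>, Inl s') \<in> (\<lambda>(s,a,t). (Inl s, a, Inl t)) ` RaM" using s' by (auto simp: mem_image_transitions)
    then obtain u where u: "(Inr t, \<alpha>, u) \<in> (\<lambda>(s,a,t). (Inl s, a, Inl t)) ` RaM \<union> (\<lambda>(s,a,t). (Inr s, a, Inr t)) ` RaN"
      "(Inl s', u) \<in> Q" using refinementD(2)[OF Q st[unfolded mem_Collect_eq prod.case]] by blast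
    then obtain t' where "u = Inr t'" "(t, \<alpha>, t') \<in> RaN" by (auto simp: mem_image_transitions)
    then show "\<exists>t'. (t, \<alpha>, t') \<in> RaN \<and> (s', t') \<in> ?Q" using u(2) by blast
  next
    fix s t \<alpha> t' assume st: "(s, t) \<in> ?Q" and t': "(t, \<alpha>, t') \<in> RcN"
    have "(Inr t, \<alpha>, Inr t') \<in> (\<lambda>(s,a,t). (Inr s, a, Inr t)) ` RcN" using t' by (auto simp: mem_image_transitions)
    then obtain u where u: "(Inl s, \<alpha>, u) \<in> (\<lambda>(s,a,t). (Inl s, a, Inl t)) ` RcM \<union> (\<lambda>(s,a,t). (Inr s, a, Inr t)) ` RcN"
      "(u, Inr t') \<in> Q" using refinementD(3)[OF Q st[unfolded mem_Collect_eq prod.case]] by blast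
    then obtain s' where "u = Inl s'" "(s, \<alpha>, s') \<in> RcM" by (auto simp: mem_image_transitions)
    then show "\<exists>s'. (s, \<alpha>, s') \<in> RcM \<and> (s', t') \<in> ?Q" using u(2) by blast
  qed
qed

lemma refinement_of_refinement_between:
  assumes Q: "refinement_between (\<Sigma>M, RaM, RcM) (\<Sigma>N, RaN, RcN) Q"
  shows "refinement (dunion (\<Sigma>M, RaM, RcM) (\<Sigma>N, RaN, RcN)) ((\<lambda>(s, t). (Inl s, Inr t)) ` Q)"
    (is "refinement _ ?Q")
  unfolding dunion_eq
proof (rule refinementI)
  show "?Q \<subseteq> (Inl ` \<Sigma>M \<union> Inr ` \<Sigma>N) \<times> (Inl ` \<Sigma>M \<union> Inr ` \<Sigma>N)"
    using refinement_betweenD(1,2)[OF Q] by fast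
next
  fix p q \<alpha> u assume "(p, q) \<in> ?Q"
    and u: "(p, \<alpha>, u) \<in> (\<lambda>(s,a,t). (Inl s, a, Inl t)) ` RaM \<union> (\<lambda>(s,a,t). (Inr s, a, Inr t)) ` RaN"
  then obtain s t where st: "(s, t) \<in> Q" "p = Inl s" "q = Inr t" by auto
  then obtain s' where s': "u = Inl s'" "(s, \<alpha>, s') \<in> RaM" using u by (auto simp: mem_image_transitions)
  then obtain t' where "(t, \<alpha>, t') \<in> RaN" "(s', t') \<in> Q" using refinement_betweenD(3)[OF Q st(1)] by blast
  then show "\<exists>t'. (q, \<alpha>, t') \<in> (\<lambda>(s,a,t). (Inl s, a, Inl t)) ` RaM \<union> (\<lambda>(s,a,t). (Inr s, a, Inr t)) ` RaN
      \<and> (u, t') \<in> ?Q"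
    using s'(1) st(3) by (auto simp: mem_image_transitions)
next
  fix p q \<alpha> u assume "(p, q) \<in> ?Q"
    and u: "(q, \<alpha>, u) \<in> (\<lambda>(s,a,t). (Inl s, a, Inl t)) ` RcM \<union> (\<lambda>(s,a,t). (Inr s, a, Inr t)) ` RcN"
  then obtain s t where st: "(s, t) \<in> Q" "p = Inl s" "q = Inr t" by auto
  then obtain t' where t': "u = Inr t'" "(t, \<alpha>, t') \<in> RcN" using u by (auto simp: mem_image_transitions)
  then obtain s' where "(s, \<alpha>, s') \<in> RcM" "(s', t') \<in> Q" using refinement_betweenD(4)[OF Q st(1)] by blast
  then show "\<exists>s'. (p, \<alpha>, s') \<in> (\<lambda>(s,a,t). (Inl s, a, Inl t)) ` RcM \<union> (\<lambda>(s,a,t). (Inr s, a, Inr t)) ` RcN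
      \<and> (s', u) \<in> ?Q"
    using t'(1) st(2) by (auto simp: mem_image_transitions)
qed

lemma refines_iff: "refines M i N j \<longleftrightarrow> (\<exists>Q. refinement_between M N Q \<and> (i, j) \<in> Q)"
proof -
  obtain \<Sigma>M RaM RcM where M: "M = (\<Sigma>M, RaM, RcM)" by (cases M)
  obtain \<Sigma>N RaN RcN where N: "N = (\<Sigma>N, RaN, RcN)" by (cases N)
  show ?thesis
  proof
    assume "refines M i N j"
    then obtain Q where "refinement (dunion M N) Q" "(Inl i, Inr j) \<in> Q" unfolding refines_def by blast
    then show "\<exists>Q. refinement_between M N Q \<and> (i, j) \<in> Q"
      unfolding M N using refinement_between_of_refinement by blast
  next
    assume "\<exists>Q. refinement_between M N Q \<and> (i, j) \<in> Q"
    then obtain Q where "refinement_between M N Q" "(i, j) \<in> Q" by blast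
    moreover from this(2) have "(Inl i, Inr j) \<in> (\<lambda>(s, t). (Inl s, Inr t)) ` Q" by force
    ultimately show "refines M i N j"
      unfolding refines_def M N using refinement_of_refinement_between by blast
  qed
qed

lemma refinement_between_relcomp:
  assumes "refinement_between M N Q1" and "refinement_between N P Q2"
  shows "refinement_between M P (Q1 O Q2)"
proof -
  obtain \<Sigma>M RaM RcM where M: "M = (\<Sigma>M, RaM, RcM)" by (cases M)
  obtain \<Sigma>N RaN RcN where N: "N = (\<Sigma>N, RaN, RcN)" by (cases N)
  obtain \<Sigma>P RaP RcP where P: "P = (\<Sigma>P, RaP, RcP)" by (cases P)
  note Q1 = refinement_betweenD[OF assms(1)[unfolded M N]]
  note Q2 = refinement_betweenD[OF assms(2)[unfolded N P]]
  show ?thesis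
    unfolding M P
  proof (rule refinement_betweenI)
    show "Q1 O Q2 \<subseteq> \<Sigma>M \<times> \<Sigma>P"
      using Q1(1) Q2(2) by blast
  next
    fix s u \<alpha> s' assume "(s, u) \<in> Q1 O Q2" and s': "(s, \<alpha>, s') \<in> RaM"
    then obtain t where t: "(s, t) \<in> Q1" "(t, u) \<in> Q2" by blast
    obtain t' where t': "(t, \<alpha>, t') \<in> RaN" "(s', t') \<in> Q1" using Q1(3)[OF t(1) s'] by blast
    obtain u' where "(u, \<alpha>, u') \<in> RaP" "(t', u') \<in> Q2" using Q2(3)[OF t(2) t'(1)] by blast
    then show "\<exists>u'. (u, \<alpha>, u') \<in> RaP \<and> (s', u') \<in> Q1 O Q2" using t'(2) by blast
  next
    fix s u \<alpha> u' assume "(s, u) \<in> Q1 O Q2" and u': "(u, \<alpha>, u') \<in> RcP"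
    then obtain t where t: "(s, t) \<in> Q1" "(t, u) \<in> Q2" by blast
    obtain t' where t': "(t, \<alpha>, t') \<in> RcN" "(t', u') \<in> Q2" using Q2(4)[OF t(2) u'] by blast
    obtain s' where "(s, \<alpha>, s') \<in> RcM" "(s', t') \<in> Q1" using Q1(4)[OF t(1) t'(1)] by blast
    then show "\<exists>s'. (s, \<alpha>, s') \<in> RcM \<and> (s', u') \<in> Q1 O Q2" using t'(2) by blast
  qed
qed

section \<open>Bifinite domains\<close>

locale bifinite_domain =
  fixes D :: "'d set" and le :: "'d \<Rightarrow> 'd \<Rightarrow> bool"
  assumes bifinite: "bifinite D le"
begin

abbreviation "K \<equiv> compacts D le"

lemma algebraic: "algebraic D le"
  using bifinite unfolding bifinite_def by (elim conjE)

lemma dcpo: "dcpo D le"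
  using algebraic unfolding algebraic_def by (elim conjE)

lemma po_on: "po_on D le"
  using dcpo unfolding dcpo_def by (elim conjE)

lemma po_refl: "x \<in> D \<Longrightarrow> le x x"
  using po_on unfolding po_on_def by blast

lemma po_antisym: "x \<in> D \<Longrightarrow> y \<in> D \<Longrightarrow> le x y \<Longrightarrow> le y x \<Longrightarrow> x = y"
  using po_on unfolding po_on_def by blast

lemma po_trans: "x \<in> D \<Longrightarrow> y \<in> D \<Longrightarrow> z \<in> D \<Longrightarrow> le x y \<Longrightarrow> le y z \<Longrightarrow> le x z"
  using po_on unfolding po_on_def by (elim conjE) blast

lemma directedD: "directed D le S \<Longrightarrow> x \<in> S \<Longrightarrow> y \<in> S \<Longrightarrow> \<exists>z\<in>S. le x z \<and> le y z"
  unfolding directed_def by auto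

lemma directed_subset: "directed D le S \<Longrightarrow> S \<subseteq> D"
  unfolding directed_def by auto

lemma directed_nonempty: "directed D le S \<Longrightarrow> S \<noteq> {}"
  unfolding directed_def by auto

lemma is_lub_in: "is_lub D le S s \<Longrightarrow> s \<in> D"
  unfolding is_lub_def upper_bounds_def by auto

lemma is_lub_upper: "is_lub D le S s \<Longrightarrow> x \<in> S \<Longrightarrow> le x s"
  unfolding is_lub_def upper_bounds_def by auto

lemma is_lub_least: "is_lub D le S s \<Longrightarrow> u \<in> D \<Longrightarrow> (\<And>x. x \<in> S \<Longrightarrow> le x u) \<Longrightarrow> le s u"
  unfolding is_lub_def upper_bounds_def by auto

lemma is_lub_unique: "is_lub D le S s \<Longrightarrow> is_lub D le S t \<Longrightarrow> s = t"
  using is_lub_least[of S s t] is_lub_least[of S t s] is_lub_in is_lub_upper po_antisym by metis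

definition lub :: "'d set \<Rightarrow> 'd" where
  "lub S = (SOME s. is_lub D le S s)"

lemma is_lub_lub: "directed D le S \<Longrightarrow> is_lub D le S (lub S)"
proof -
  assume "directed D le S"
  then have "\<exists>s. is_lub D le S s" using dcpo unfolding dcpo_def by blast
  then show ?thesis unfolding lub_def by (rule someI_ex)
qed

lemma directed_common_upper:
  assumes "directed D le S" "finite I" "\<And>i. i \<in> I \<Longrightarrow> \<exists>x\<in>S. P i x"
    and "\<And>i x y. i \<in> I \<Longrightarrow> x \<in> S \<Longrightarrow> y \<in> S \<Longrightarrow> le x y \<Longrightarrow> P i x \<Longrightarrow> P i y"
  shows "\<exists>x\<in>S. \<forall>i\<in>I. P i x"
  using assms(2,3,4)
proof (induction I rule: finite_induct)
  case empty
  then show ?case using directed_nonempty[OF assms(1)] by auto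
next
  case (insert i I)
  then obtain x where x: "x \<in> S" "\<forall>i\<in>I. P i x" by auto
  obtain y where y: "y \<in> S" "P i y" using insert.prems(1)[of i] by auto
  obtain z where z: "z \<in> S" "le x z" "le y z" using directedD[OF assms(1) x(1) y(1)] by auto
  have "P i z" using insert.prems(2)[of i y z] y z by blast
  moreover have "P i' z" if "i' \<in> I" for i' using insert.prems(2)[of i' x z] that x z by blast
  ultimately show ?case using z(1) by blast
qed

lemma chain_le:
  assumes "\<And>n. f n \<in> D" "\<And>n. le (f n) (f (Suc n))" "m \<le> n"
  shows "le (f m) (f n)"
  using assms(3)
proof (induction n rule: dec_induct)
  case base
  then show ?case using po_refl assms(1) by blast
next
  case (step n)
  then show ?case using po_trans assms(1,2) by blast
qed

lemma chain_directed:
  assumes "\<And>n. f n \<in> D" "\<And>n. le (f n) (f (Suc n))"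
  shows "directed D le (range f)"
  unfolding directed_def
proof (intro conjI ballI)
  fix a b assume "a \<in> range f" "b \<in> range f"
  then obtain m n where "a = f m" "b = f n" by blast
  then show "\<exists>z\<in>range f. le a z \<and> le b z"
    using chain_le[of f, OF assms, of m "max m n"] chain_le[of f, OF assms, of n "max m n"] by auto
qed (use assms(1) in auto)

lemma chain_lub:
  assumes "\<And>n. f n \<in> D" "\<And>n. le (f n) (f (Suc n))"
  shows "is_lub D le (range f) (lub (range f))"
  using is_lub_lub[OF chain_directed[of f, OF assms]] .

lemma compactD: "k \<in> K \<Longrightarrow> directed D le S \<Longrightarrow> is_lub D le S s \<Longrightarrow> le k s \<Longrightarrow> \<exists>x\<in>S. le k x"
  unfolding compacts_def by blast

lemma compacts_subset: "K \<subseteq> D"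
  unfolding compacts_def by auto

lemma compacts_below_directed: "x \<in> D \<Longrightarrow> directed D le {k\<in>K. le k x}"
  using algebraic unfolding algebraic_def by auto

lemma compacts_below_lub: "x \<in> D \<Longrightarrow> is_lub D le {k\<in>K. le k x} x"
  using algebraic unfolding algebraic_def by auto

lemma compact_below: "x \<in> D \<Longrightarrow> \<exists>k\<in>K. le k x"
  using compacts_below_directed directed_nonempty by blast

lemma compact_below_not_le: "x \<in> D \<Longrightarrow> y \<in> D \<Longrightarrow> \<not> le x y \<Longrightarrow> \<exists>k\<in>K. le k x \<and> \<not> le k y"
  using is_lub_least[OF compacts_below_lub] by blast

lemma mub_finite:
  assumes "finite F" "F \<subseteq> K"
  shows "finite (mub D le F)" "mub D le F \<subseteq> K"
    and "u \<in> upper_bounds D le F \<Longrightarrow> \<exists>m\<in>mub D le F. le m u"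
proof -
  have closure: "finite (mub_closure D le F) \<and> mub_closure D le F \<subseteq> K"
    and "\<forall>u\<in>upper_bounds D le F. \<exists>m\<in>mub D le F. le m u"
    using bifinite assms unfolding bifinite_def by blast+
  then show "u \<in> upper_bounds D le F \<Longrightarrow> \<exists>m\<in>mub D le F. le m u" by blast
  have "mub D le F \<subseteq> (mub_step D le ^^ 1) F"
    unfolding mub_step_def using assms(1) by auto
  then have "mub D le F \<subseteq> mub_closure D le F"
    unfolding mub_closure_def by blast
  then show "finite (mub D le F)" "mub D le F \<subseteq> K"
    using closure finite_subset by blast+
qed

lemma upI: "y \<in> D \<Longrightarrow> x \<in> X \<Longrightarrow> le x y \<Longrightarrow> y \<in> up D le X"
  unfolding up_def by blast

lemma upE: "y \<in> up D le X \<Longrightarrow> (\<And>x. y \<in> D \<Longrightarrow> x \<in> X \<Longrightarrow> le x y \<Longrightarrow> thesis) \<Longrightarrow> thesis"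
  unfolding up_def by blast

lemma downI: "y \<in> D \<Longrightarrow> x \<in> X \<Longrightarrow> le y x \<Longrightarrow> y \<in> down D le X"
  unfolding down_def by blast

lemma downE: "y \<in> down D le X \<Longrightarrow> (\<And>x. y \<in> D \<Longrightarrow> x \<in> X \<Longrightarrow> le y x \<Longrightarrow> thesis) \<Longrightarrow> thesis"
  unfolding down_def by blast

lemma up_subset: "up D le X \<subseteq> D"
  unfolding up_def by blast

lemma down_subset: "down D le X \<subseteq> D"
  unfolding down_def by blast

lemma subset_up: "X \<subseteq> D \<Longrightarrow> X \<subseteq> up D le X"
  using po_refl unfolding up_def by blast

lemma subset_down: "X \<subseteq> D \<Longrightarrow> X \<subseteq> down D le X"
  using po_refl unfolding down_def by blast

lemma down_mono:
  assumes "A \<subseteq> D" "B \<subseteq> D" "\<And>a. a \<in> A \<Longrightarrow> \<exists>b\<in>B. le a b"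
  shows "down D le A \<subseteq> down D le B"
proof
  fix y assume "y \<in> down D le A"
  then obtain a where a: "y \<in> D" "a \<in> A" "le y a" by (rule downE)
  then obtain b where b: "b \<in> B" "le a b" using assms(3) by blast
  have "le y b" using po_trans[of y a b] a b assms(1,2) by blast
  then show "y \<in> down D le B" by (rule downI[OF a(1) b(1)])
qed

lemma up_antimono:
  assumes "A \<subseteq> D" "B \<subseteq> D" "\<And>b. b \<in> B \<Longrightarrow> \<exists>a\<in>A. le a b"
  shows "up D le B \<subseteq> up D le A"
proof
  fix y assume "y \<in> up D le B"
  then obtain b where b: "y \<in> D" "b \<in> B" "le b y" by (rule upE)
  then obtain a where a: "a \<in> A" "le a b" using assms(3) by blast
  have "le a y" using po_trans[of a b y] a b assms(1,2) by blast
  then show "y \<in> up D le A" by (rule upI[OF b(1) a(1)])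
qed

lemma up_up: "X \<subseteq> D \<Longrightarrow> up D le (up D le X) = up D le X"
proof
  assume X: "X \<subseteq> D"
  show "up D le (up D le X) \<subseteq> up D le X"
    by (rule up_antimono[OF X up_subset]) (auto elim: upE)
  show "up D le X \<subseteq> up D le (up D le X)"
    by (rule subset_up[OF up_subset])
qed

lemma upper_set_up: "X \<subseteq> D \<Longrightarrow> upper_set D le (up D le X)"
  unfolding upper_set_def using up_subset up_up by blast

lemma upper_bounds_eq_mub:
  assumes "finite F" "F \<subseteq> K"
  shows "upper_bounds D le F = (\<Union>m\<in>mub D le F. up D le {m})"
proof
  show "upper_bounds D le F \<subseteq> (\<Union>m\<in>mub D le F. up D le {m})"
  proof
    fix u assume u: "u \<in> upper_bounds D le F"
    then obtain m where "m \<in> mub D le F" "le m u" using mub_finite(3)[OF assms] by blast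
    moreover have "u \<in> D" using u unfolding upper_bounds_def by blast
    ultimately show "u \<in> (\<Union>m\<in>mub D le F. up D le {m})" by (blast intro: upI)
  qed
  show "(\<Union>m\<in>mub D le F. up D le {m}) \<subseteq> upper_bounds D le F"
  proof
    fix x assume "x \<in> (\<Union>m\<in>mub D le F. up D le {m})"
    then obtain m where m: "m \<in> mub D le F" "x \<in> D" "le m x" unfolding up_def by blast
    then have "m \<in> D" "\<forall>f\<in>F. le f m" unfolding mub_def upper_bounds_def by auto
    then have "\<forall>f\<in>F. le f x" using po_trans m(2,3) assms(2) compacts_subset by blast
    then show "x \<in> upper_bounds D le F" unfolding upper_bounds_def using m(2) by blast
  qed
qed

lemma scott_closed_subset: "scott_closed D le C \<Longrightarrow> C \<subseteq> D"
  unfolding scott_closed_def by simp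

lemma scott_closed_complement: "scott_closed D le C \<Longrightarrow> D - C = up D le ((D - C) \<inter> K)"
  unfolding scott_closed_def scott_open_def by blast

lemma scott_closed_down:
  assumes "scott_closed D le C" "x \<in> C" "y \<in> D" "le y x"
  shows "y \<in> C"
proof (rule ccontr)
  assume "y \<notin> C"
  then obtain k where k: "k \<in> (D - C) \<inter> K" "le k y"
    using scott_closed_complement[OF assms(1)] assms(3) by (auto elim: upE)
  have "x \<in> D" using assms(1,2) scott_closed_subset by blast
  moreover have "le k x" using po_trans[OF _ assms(3) \<open>x \<in> D\<close> k(2) assms(4)] k compacts_subset by blast
  ultimately have "x \<in> up D le ((D - C) \<inter> K)" using k(1) by (intro upI)
  then show False using scott_closed_complement[OF assms(1)] assms(2) by blast
qed

lemma scott_closed_lub: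
  assumes "scott_closed D le C" "directed D le S" "S \<subseteq> C" "is_lub D le S s"
  shows "s \<in> C"
proof (rule ccontr)
  assume "s \<notin> C"
  then obtain k where k: "k \<in> (D - C) \<inter> K" "le k s"
    using scott_closed_complement[OF assms(1)] is_lub_in[OF assms(4)] by (auto elim: upE)
  then obtain x where x: "x \<in> S" "le k x" using compactD[OF _ assms(2,4)] by blast
  then have "x \<in> up D le ((D - C) \<inter> K)" using k(1) directed_subset[OF assms(2)] by (blast intro: upI)
  then show False using scott_closed_complement[OF assms(1)] assms(3) x(1) by blast
qed

lemma scott_closedI:
  assumes "C \<subseteq> D"
    and down: "\<And>x y. x \<in> C \<Longrightarrow> y \<in> D \<Longrightarrow> le y x \<Longrightarrow> y \<in> C"
    and lub: "\<And>S s. directed D le S \<Longrightarrow> S \<subseteq> C \<Longrightarrow> is_lub D le S s \<Longrightarrow> s \<in> C"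
  shows "scott_closed D le C"
  unfolding scott_closed_def scott_open_def
proof (intro conjI assms(1) equalityI subsetI)
  fix v assume v: "v \<in> D - C"
  have vD: "v \<in> D" using v by blast
  have "\<not> {k\<in>K. le k v} \<subseteq> C"
    using lub[OF compacts_below_directed[OF vD] _ compacts_below_lub[OF vD]] v by blast
  then obtain k where "k \<in> K" "le k v" "k \<notin> C" by blast
  then show "v \<in> up D le ((D - C) \<inter> K)" using v compacts_subset by (intro upI) auto
next
  fix y assume "y \<in> up D le ((D - C) \<inter> K)"
  then obtain k where "y \<in> D" "k \<in> (D - C) \<inter> K" "le k y" by (auto elim: upE)
  then show "y \<in> D - C" using down[of y k] by blast
qed simp

lemma scott_closed_D: "scott_closed D le D"
  unfolding scott_closed_def scott_open_def up_def by simp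

lemma scott_closed_Inter:
  assumes "\<C> \<noteq> {}" "\<And>C. C \<in> \<C> \<Longrightarrow> scott_closed D le C"
  shows "scott_closed D le (\<Inter>\<C>)"
proof (rule scott_closedI)
  show "\<Inter>\<C> \<subseteq> D" using assms scott_closed_subset by blast
qed (use assms(2) scott_closed_down scott_closed_lub in blast)+

lemma scott_closed_Diff:
  assumes "scott_open D le V"
  shows "scott_closed D le (D - V)"
proof -
  have "V \<subseteq> D" using assms unfolding scott_open_def by blast
  then show ?thesis unfolding scott_closed_def using assms by (simp add: Diff_Diff_Int Int_absorb1)
qed

lemma scott_open_up_compacts:
  assumes "B \<subseteq> K"
  shows "scott_open D le (up D le B)"
  unfolding scott_open_def
proof (intro conjI up_subset equalityI subsetI)
  fix y assume "y \<in> up D le B"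
  then obtain b where b: "y \<in> D" "b \<in> B" "le b y" by (rule upE)
  have "b \<in> up D le B \<inter> K" using b assms compacts_subset po_refl by (auto intro: upI)
  then show "y \<in> up D le (up D le B \<inter> K)" using b by (intro upI)
next
  fix y assume "y \<in> up D le (up D le B \<inter> K)"
  then obtain c where "y \<in> D" "c \<in> up D le B" "le c y" by (auto elim: upE)
  then show "y \<in> up D le B"
    using up_up[of B] assms compacts_subset by (blast intro: upI)
qed

lemma scott_closure_closed: "X \<subseteq> D \<Longrightarrow> scott_closed D le (scott_closure D le X)"
  unfolding scott_closure_def using scott_closed_D by (intro scott_closed_Inter) auto

lemma scott_closure_subset: "X \<subseteq> scott_closure D le X"
  unfolding scott_closure_def by blast

lemma scott_closure_least: "scott_closed D le C \<Longrightarrow> X \<subseteq> C \<Longrightarrow> scott_closure D le X \<subseteq> C"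
  unfolding scott_closure_def by blast

lemma scott_closure_memI: "x \<in> X \<Longrightarrow> x \<in> scott_closure D le X"
  using scott_closure_subset by blast

lemma scott_closed_down_finite:
  assumes "finite F" "F \<subseteq> D"
  shows "scott_closed D le (down D le F)"
proof (rule scott_closedI[OF down_subset])
  fix x y assume "x \<in> down D le F" "y \<in> D" "le y x"
  then show "y \<in> down D le F"
    using down_mono[OF _ assms(2), of "{x}"] down_subset po_refl by (blast intro: downI elim: downE)
next
  fix S s assume S: "directed D le S" "S \<subseteq> down D le F" "is_lub D le S s"
  have SD: "S \<subseteq> D" using directed_subset[OF S(1)] .
  have "\<exists>f\<in>F. \<forall>x\<in>S. le x f"
  proof (rule ccontr)
    assume "\<not> ?thesis"
    then obtain g where g: "\<And>f. f \<in> F \<Longrightarrow> g f \<in> S \<and> \<not> le (g f) f" by metis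
    have "\<exists>z\<in>S. \<forall>f\<in>F. le (g f) z"
      by (rule directed_common_upper[OF S(1) assms(1)])
        (use g po_refl po_trans SD in \<open>blast+\<close>)
    then obtain z where z: "z \<in> S" "\<forall>f\<in>F. le (g f) z" by blast
    obtain f where f: "f \<in> F" "le z f" using S(2) z(1) by (auto elim!: downE)
    have "le (g f) f" using po_trans[of "g f" z f] g[OF f(1)] z f SD assms(2) by blast
    then show False using g[OF f(1)] by blast
  qed
  then obtain f where "f \<in> F" "\<forall>x\<in>S. le x f" by blast
  then show "s \<in> down D le F"
    using is_lub_least[OF S(3)] is_lub_in[OF S(3)] assms(2) by (blast intro: downI)
qed

lemma scott_closure_finite:
  assumes "finite F" "F \<subseteq> D"
  shows "scott_closure D le F = down D le F"
proof
  show "scott_closure D le F \<subseteq> down D le F"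
    by (rule scott_closure_least[OF scott_closed_down_finite[OF assms] subset_down[OF assms(2)]])
  show "down D le F \<subseteq> scott_closure D le F"
    using scott_closed_down[OF scott_closure_closed[OF assms(2)]] scott_closure_memI
    by (blast elim: downE)
qed

lemma compact_in_scott_closure:
  assumes "X \<subseteq> D" "a \<in> K" "a \<in> scott_closure D le X"
  shows "\<exists>x\<in>X. le a x"
proof -
  define W where "W = {y\<in>D. \<forall>k\<in>K. le k y \<longrightarrow> (\<exists>x\<in>X. le k x)}"
  have "scott_closed D le W"
  proof (rule scott_closedI)
    fix x y assume "x \<in> W" "y \<in> D" "le y x"
    then show "y \<in> W" unfolding W_def using po_trans compacts_subset by blast
  next
    fix S s assume "directed D le S" "S \<subseteq> W" "is_lub D le S s"
    then show "s \<in> W" unfolding W_def using compactD is_lub_in by blast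
  qed (simp add: W_def)
  moreover have "X \<subseteq> W" unfolding W_def using assms(1) by blast
  ultimately have "a \<in> W" using scott_closure_least assms(3) by blast
  then show ?thesis unfolding W_def using assms(2) po_refl compacts_subset by blast
qed

lemma lawson_closed_subset: "lawson_closed D le C \<Longrightarrow> C \<subseteq> D"
  unfolding lawson_closed_def by simp

lemma lawson_closedI:
  assumes "C \<subseteq> D"
    and "\<And>x. x \<in> D \<Longrightarrow> x \<notin> C \<Longrightarrow>
           \<exists>F. finite F \<and> F \<subseteq> lawson_subbasis D le \<and> x \<in> \<Inter>F \<and> D \<inter> \<Inter>F \<inter> C = {}"
  shows "lawson_closed D le C"
  unfolding lawson_closed_def lawson_open_def
proof (intro conjI ballI Diff_subset assms(1))
  fix x assume x: "x \<in> D - C"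
  then have "x \<in> D" "x \<notin> C" by simp_all
  then obtain F where F: "finite F" "F \<subseteq> lawson_subbasis D le" "x \<in> \<Inter>F" "D \<inter> \<Inter>F \<inter> C = {}"
    using assms(2)[OF \<open>x \<in> D\<close> \<open>x \<notin> C\<close>] by (elim exE conjE)
  have "x \<in> D \<inter> \<Inter>F" using \<open>x \<in> D\<close> F(3) by (rule IntI)
  moreover have "D \<inter> \<Inter>F \<subseteq> D - C" using F(4) by blast
  ultimately show "\<exists>F. finite F \<and> F \<subseteq> lawson_subbasis D le \<and> x \<in> D \<inter> \<Inter>F \<and> D \<inter> \<Inter>F \<subseteq> D - C"
    using F(1,2) by (intro exI[of _ F] conjI)
qed

lemma lawson_closedE:
  assumes "lawson_closed D le C" "x \<in> D" "x \<notin> C"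
  obtains F where "finite F" "F \<subseteq> lawson_subbasis D le" "x \<in> \<Inter>F" "D \<inter> \<Inter>F \<inter> C = {}"
proof -
  have "x \<in> D - C" using assms(2,3) by (rule DiffI)
  then have "\<exists>F. finite F \<and> F \<subseteq> lawson_subbasis D le \<and> x \<in> D \<inter> \<Inter>F \<and> D \<inter> \<Inter>F \<subseteq> D - C"
    using assms(1) unfolding lawson_closed_def lawson_open_def by (elim conjE) (rule bspec)
  then obtain F where F: "finite F" "F \<subseteq> lawson_subbasis D le" "x \<in> D \<inter> \<Inter>F" "D \<inter> \<Inter>F \<subseteq> D - C"
    by (elim exE conjE)
  have "x \<in> \<Inter>F" using F(3) by (rule IntD2)
  moreover have "D \<inter> \<Inter>F \<inter> C = {}" using F(4) by blast
  ultimately show ?thesis using that F(1,2) by blast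
qed

lemma lawson_closed_Inter:
  assumes "\<C> \<noteq> {}" "\<And>C. C \<in> \<C> \<Longrightarrow> lawson_closed D le C"
  shows "lawson_closed D le (\<Inter>\<C>)"
proof (rule lawson_closedI)
  show "\<Inter>\<C> \<subseteq> D" using assms lawson_closed_subset by blast
  fix x assume x: "x \<in> D" "x \<notin> \<Inter>\<C>"
  then obtain C where C: "C \<in> \<C>" "x \<notin> C" by blast
  obtain F where F: "finite F" "F \<subseteq> lawson_subbasis D le" "x \<in> \<Inter>F" "D \<inter> \<Inter>F \<inter> C = {}"
    using lawson_closedE[OF assms(2)[OF C(1)] x(1) C(2)] .
  have "D \<inter> \<Inter>F \<inter> \<Inter>\<C> = {}" using F(4) C(1) by blast
  then show "\<exists>F. finite F \<and> F \<subseteq> lawson_subbasis D le \<and> x \<in> \<Inter>F \<and> D \<inter> \<Inter>F \<inter> \<Inter>\<C> = {}"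
    using F(1-3) by blast
qed

lemma lawson_closed_Int: "lawson_closed D le A \<Longrightarrow> lawson_closed D le B \<Longrightarrow> lawson_closed D le (A \<inter> B)"
  using lawson_closed_Inter[of "{A, B}"] by auto

lemma lawson_closed_up_finite:
  assumes "finite G" "G \<subseteq> D"
  shows "lawson_closed D le (up D le G)"
proof (rule lawson_closedI[OF up_subset])
  fix x assume x: "x \<in> D" "x \<notin> up D le G"
  obtain k where k: "k \<in> K" "le k x" using compact_below[OF x(1)] by blast
  have "\<exists>l\<in>K. le l f \<and> \<not> le l x" if "f \<in> G" for f
  proof (rule compact_below_not_le)
    show "f \<in> D" using that assms(2) by blast
    show "\<not> le f x" using that x \<open>f \<in> D\<close> by (blast intro: upI)
  qed (rule x(1))
  then obtain g where g: "\<And>f. f \<in> G \<Longrightarrow> g f \<in> K \<and> le (g f) f \<and> \<not> le (g f) x" by metis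
  let ?F = "(\<lambda>f. up D le {k} - up D le {g f}) ` G"
  have "?F \<subseteq> lawson_subbasis D le"
  proof
    fix W assume "W \<in> ?F"
    then obtain f where "f \<in> G" "W = up D le {k} - up D le {g f}" by blast
    moreover have "g f \<in> K" using g \<open>f \<in> G\<close> by blast
    ultimately show "W \<in> lawson_subbasis D le" unfolding lawson_subbasis_def using k(1) by blast
  qed
  moreover have "x \<in> \<Inter>?F"
  proof (rule INT_I)
    fix f assume "f \<in> G"
    have "x \<in> up D le {k}" using x(1) k(2) by (auto intro: upI)
    moreover have "x \<notin> up D le {g f}" using g[OF \<open>f \<in> G\<close>] by (auto elim: upE)
    ultimately show "x \<in> up D le {k} - up D le {g f}" by blast
  qed
  moreover have "z \<notin> up D le G" if z: "z \<in> D" "z \<in> \<Inter>?F" for z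
  proof
    assume "z \<in> up D le G"
    then obtain f where f: "f \<in> G" "le f z" by (auto elim: upE)
    have "le (g f) z" using po_trans[of "g f" f z] g[OF f(1)] z(1) f assms(2) compacts_subset by blast
    then have "z \<in> up D le {g f}" using z(1) by (auto intro: upI)
    moreover have "z \<in> up D le {k} - up D le {g f}" using z(2) f(1) by blast
    ultimately show False by blast
  qed
  then have "D \<inter> \<Inter>?F \<inter> up D le G = {}" by (meson IntE equals0I)
  moreover have "finite ?F" using assms(1) by (rule finite_imageI)
  ultimately show "\<exists>F. finite F \<and> F \<subseteq> lawson_subbasis D le \<and> x \<in> \<Inter>F \<and> D \<inter> \<Inter>F \<inter> up D le G = {}"
    by (intro exI[of _ ?F] conjI)
qed

definition has_fip :: "'d set set \<Rightarrow> bool" where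
  "has_fip \<C> \<longleftrightarrow> (\<forall>G. finite G \<and> G \<subseteq> \<C> \<longrightarrow> D \<inter> \<Inter>G \<noteq> {})"

lemma maximal_fip_extension:
  assumes "\<C> \<subseteq> Pow D" "has_fip \<C>"
  obtains M where "\<C> \<subseteq> M" "M \<subseteq> Pow D" "has_fip M"
    "\<And>X. X \<subseteq> D \<Longrightarrow> has_fip (insert X M) \<Longrightarrow> X \<in> M"
proof -
  let ?A = "{M. \<C> \<subseteq> M \<and> M \<subseteq> Pow D \<and> has_fip M}"
  have "\<exists>M\<in>?A. \<forall>X\<in>?A. M \<subseteq> X \<longrightarrow> X = M"
  proof (rule subset_Zorn_nonempty)
    show "?A \<noteq> {}" using assms by blast
  next
    fix \<B> assume B: "\<B> \<noteq> {}" "subset.chain ?A \<B>"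
    have sub: "\<B> \<subseteq> ?A" using B(2) unfolding subset.chain_def by (elim conjE)
    have "has_fip (\<Union>\<B>)" unfolding has_fip_def
    proof (intro allI impI)
      fix G assume G: "finite G \<and> G \<subseteq> \<Union>\<B>"
      then obtain M where "M \<in> \<B>" "G \<subseteq> M" using finite_subset_Union_chain[OF _ _ B] by blast
      then have "has_fip M" "finite G" "G \<subseteq> M" using sub G by auto
      then show "D \<inter> \<Inter>G \<noteq> {}" unfolding has_fip_def by blast
    qed
    moreover obtain M0 where "M0 \<in> \<B>" using B(1) by blast
    then have "\<C> \<subseteq> \<Union>\<B>" using sub by blast
    moreover have "\<Union>\<B> \<subseteq> Pow D" using sub by auto
    ultimately show "\<Union>\<B> \<in> ?A" by simp
  qed
  then obtain M where M: "M \<in> ?A" "\<forall>X\<in>?A. M \<subseteq> X \<longrightarrow> X = M" by blast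
  have maximal: "X \<in> M" if "X \<subseteq> D" "has_fip (insert X M)" for X
  proof -
    have "insert X M \<in> ?A" using M(1) that by auto
    with M(2) have "M \<subseteq> insert X M \<longrightarrow> insert X M = M" by (rule bspec)
    then have "insert X M = M" using subset_insertI by (rule mp)
    then show ?thesis by blast
  qed
  show ?thesis
    by (rule that[of M]) (use M(1) maximal in auto)
qed

end

text \<open>A maximal family with the finite intersection property behaves like an ultrafilter; it converges
  in the Lawson topology to the least upper bound of the compact elements whose upper sets it contains.\<close>
locale lawson_ultrafilter = bifinite_domain D le for D :: "'d set" and le +
  fixes M :: "'d set set"
  assumes M_subset: "M \<subseteq> Pow D" and M_fip: "has_fip M"
    and M_maximal: "\<And>X. X \<subseteq> D \<Longrightarrow> has_fip (insert X M) \<Longrightarrow> X \<in> M"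
begin

lemma Inter_nonempty: "finite G \<Longrightarrow> G \<subseteq> M \<Longrightarrow> D \<inter> \<Inter>G \<noteq> {}"
  using M_fip unfolding has_fip_def by blast

lemma superset_mem:
  assumes "A \<in> M" "A \<subseteq> B" "B \<subseteq> D"
  shows "B \<in> M"
proof (rule M_maximal[OF assms(3)])
  show "has_fip (insert B M)" unfolding has_fip_def
  proof (intro allI impI)
    fix G assume G: "finite G \<and> G \<subseteq> insert B M"
    let ?G = "insert A (G - {B})"
    have "finite ?G" "?G \<subseteq> M" using G assms(1) by auto
    then have "D \<inter> \<Inter>?G \<noteq> {}" by (rule Inter_nonempty)
    moreover have "\<Inter>?G \<subseteq> \<Inter>G" using assms(2) by auto
    ultimately show "D \<inter> \<Inter>G \<noteq> {}" by auto
  qed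
qed

lemma Int_mem:
  assumes "A \<in> M" "B \<in> M"
  shows "A \<inter> B \<in> M"
proof (rule M_maximal)
  show "A \<inter> B \<subseteq> D" using assms M_subset by auto
  show "has_fip (insert (A \<inter> B) M)" unfolding has_fip_def
  proof (intro allI impI)
    fix G assume G: "finite G \<and> G \<subseteq> insert (A \<inter> B) M"
    let ?G = "insert A (insert B (G - {A \<inter> B}))"
    have "finite ?G" "?G \<subseteq> M" using G assms by auto
    then have "D \<inter> \<Inter>?G \<noteq> {}" by (rule Inter_nonempty)
    moreover have "\<Inter>?G \<subseteq> \<Inter>G" by auto
    ultimately show "D \<inter> \<Inter>G \<noteq> {}" by auto
  qed
qed

lemma D_mem: "D \<in> M"
proof (rule M_maximal)
  show "has_fip (insert D M)" unfolding has_fip_def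
  proof (intro allI impI)
    fix G assume G: "finite G \<and> G \<subseteq> insert D M"
    have "finite (G - {D})" "G - {D} \<subseteq> M" using G by auto
    then have "D \<inter> \<Inter>(G - {D}) \<noteq> {}" by (rule Inter_nonempty)
    moreover have "D \<inter> \<Inter>(G - {D}) \<subseteq> D \<inter> \<Inter>G" by auto
    ultimately show "D \<inter> \<Inter>G \<noteq> {}" by auto
  qed
qed simp

lemma Inter_mem: "finite G \<Longrightarrow> G \<subseteq> M \<Longrightarrow> D \<inter> \<Inter>G \<in> M"
proof (induction G rule: finite_induct)
  case empty
  then show ?case using D_mem by simp
next
  case (insert X G)
  then have "X \<in> M" "D \<inter> \<Inter>G \<in> M" by auto
  then have "X \<inter> (D \<inter> \<Inter>G) \<in> M" by (rule Int_mem)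
  then show ?case by (simp add: Int_left_commute)
qed

lemma Union_mem:
  assumes "finite \<B>" "\<B> \<subseteq> Pow D" "\<Union>\<B> \<in> M"
  shows "\<exists>B\<in>\<B>. B \<in> M"
proof (rule ccontr)
  assume none: "\<not> ?thesis"
  have "\<exists>G. finite G \<and> G \<subseteq> M \<and> D \<inter> B \<inter> \<Inter>G = {}" if B: "B \<in> \<B>" for B
  proof -
    have "B \<notin> M" using none B by auto
    then have "\<not> has_fip (insert B M)" using M_maximal[of B] B assms(2) by auto
    then obtain G where G: "finite G" "G \<subseteq> insert B M" "D \<inter> \<Inter>G = {}"
      unfolding has_fip_def by auto
    have "D \<inter> B \<inter> \<Inter>(G - {B}) \<subseteq> D \<inter> \<Inter>G" by auto
    then have "D \<inter> B \<inter> \<Inter>(G - {B}) = {}" using G(3) by auto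
    moreover have "finite (G - {B})" "G - {B} \<subseteq> M" using G(1,2) by auto
    ultimately show ?thesis by blast
  qed
  then obtain g where g: "\<And>B. B \<in> \<B> \<Longrightarrow> finite (g B) \<and> g B \<subseteq> M \<and> D \<inter> B \<inter> \<Inter>(g B) = {}"
    by metis
  let ?H = "insert (\<Union>\<B>) (\<Union>B\<in>\<B>. g B)"
  have "finite ?H" using assms(1) g by auto
  moreover have "?H \<subseteq> M" using assms(3) g by auto
  ultimately have "D \<inter> \<Inter>?H \<noteq> {}" by (rule Inter_nonempty)
  then obtain x where x: "x \<in> D" "x \<in> \<Union>\<B>" "\<And>B. B \<in> \<B> \<Longrightarrow> x \<in> \<Inter>(g B)" by auto
  then obtain B where "B \<in> \<B>" "x \<in> B" by auto
  then have "x \<in> D \<inter> B \<inter> \<Inter>(g B)" using x by auto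
  then show False using g \<open>B \<in> \<B>\<close> by auto
qed

lemma Diff_mem:
  assumes "X \<subseteq> D" "X \<notin> M"
  shows "D - X \<in> M"
proof -
  have "\<Union>{X, D - X} \<in> M" using D_mem assms(1) by (simp add: Un_absorb1)
  then show ?thesis using Union_mem[of "{X, D - X}"] assms by auto
qed

definition limit_basis :: "'d set" where
  "limit_basis = {k\<in>K. up D le {k} \<in> M}"

lemma up_mub_mem:
  assumes "finite F" "F \<subseteq> K" "upper_bounds D le F \<in> M"
  obtains m where "m \<in> mub D le F" "up D le {m} \<in> M"
proof -
  let ?B = "(\<lambda>m. up D le {m}) ` mub D le F"
  have "finite ?B" using mub_finite(1)[OF assms(1,2)] by (rule finite_imageI)
  moreover have "?B \<subseteq> Pow D" using up_subset by auto
  moreover have "\<Union>?B \<in> M" using upper_bounds_eq_mub[OF assms(1,2)] assms(3) by simp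
  ultimately have "\<exists>B\<in>?B. B \<in> M" by (rule Union_mem)
  then show ?thesis using that by auto
qed

lemma limit_basis_directed: "directed D le limit_basis"
  unfolding directed_def
proof (intro conjI ballI)
  show "limit_basis \<subseteq> D" unfolding limit_basis_def using compacts_subset by auto
  have "upper_bounds D le {} \<in> M" using D_mem unfolding upper_bounds_def by simp
  then obtain m where "m \<in> mub D le {}" "up D le {m} \<in> M" using up_mub_mem[of "{}"] by auto
  then have "m \<in> limit_basis" unfolding limit_basis_def using mub_finite(2)[of "{}"] by auto
  then show "limit_basis \<noteq> {}" by auto
next
  fix k1 k2 assume k: "k1 \<in> limit_basis" "k2 \<in> limit_basis"
  then have F: "{k1, k2} \<subseteq> K" unfolding limit_basis_def by auto
  have "up D le {k1} \<inter> up D le {k2} \<in> M"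
    using k unfolding limit_basis_def by (auto intro: Int_mem)
  moreover have "up D le {k1} \<inter> up D le {k2} = upper_bounds D le {k1, k2}"
    unfolding up_def upper_bounds_def by auto
  ultimately obtain m where m: "m \<in> mub D le {k1, k2}" "up D le {m} \<in> M"
    using up_mub_mem[OF _ F] by auto
  then have "m \<in> limit_basis" unfolding limit_basis_def using mub_finite(2)[OF _ F] by auto
  moreover have "le k1 m" "le k2 m" using m(1) unfolding mub_def upper_bounds_def by auto
  ultimately show "\<exists>z\<in>limit_basis. le k1 z \<and> le k2 z" by auto
qed

lemma subbasic_mem:
  assumes "W \<in> lawson_subbasis D le" "lub limit_basis \<in> W"
  shows "W \<in> M"
proof -
  let ?x = "lub limit_basis"
  have x: "is_lub D le limit_basis ?x" by (rule is_lub_lub[OF limit_basis_directed])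
  obtain k l where kl: "W = up D le {k} - up D le {l}" "k \<in> K" "l \<in> K"
    using assms(1) unfolding lawson_subbasis_def by auto
  then have "le k ?x" "\<not> le l ?x" using assms(2) is_lub_in[OF x] by (auto elim: upE intro: upI)
  obtain s where s: "s \<in> limit_basis" "le k s"
    using compactD[OF kl(2) limit_basis_directed x \<open>le k ?x\<close>] by auto
  have "s \<in> D" "k \<in> D" using s(1) kl(2) compacts_subset unfolding limit_basis_def by auto
  have "up D le {s} \<subseteq> up D le {k}"
  proof
    fix z assume "z \<in> up D le {s}"
    then have "z \<in> D" "le s z" by (auto elim: upE)
    then show "z \<in> up D le {k}" using po_trans[OF \<open>k \<in> D\<close> \<open>s \<in> D\<close> \<open>z \<in> D\<close> s(2)] by (auto intro: upI)
  qed
  moreover have "up D le {s} \<in> M" using s(1) unfolding limit_basis_def by auto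
  ultimately have "up D le {k} \<in> M" using superset_mem[OF _ _ up_subset] by blast
  moreover have "l \<notin> limit_basis" using is_lub_upper[OF x] \<open>\<not> le l ?x\<close> by auto
  then have "D - up D le {l} \<in> M"
    using Diff_mem[OF up_subset] kl(3) unfolding limit_basis_def by auto
  ultimately have "up D le {k} \<inter> (D - up D le {l}) \<in> M" by (rule Int_mem)
  moreover have "up D le {k} \<inter> (D - up D le {l}) = W" using kl(1) up_subset by auto
  ultimately show ?thesis by simp
qed

lemma lub_limit_basis_mem:
  assumes "lawson_closed D le C" "C \<in> M"
  shows "lub limit_basis \<in> C"
proof (rule ccontr)
  let ?x = "lub limit_basis"
  have xD: "?x \<in> D" by (rule is_lub_in[OF is_lub_lub[OF limit_basis_directed]])
  assume "?x \<notin> C"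
  obtain F where F: "finite F" "F \<subseteq> lawson_subbasis D le" "?x \<in> \<Inter>F" "D \<inter> \<Inter>F \<inter> C = {}"
    by (rule lawson_closedE[OF assms(1) xD \<open>?x \<notin> C\<close>])
  have "F \<subseteq> M" using F(2,3) subbasic_mem by auto
  then have "D \<inter> \<Inter>F \<in> M" by (rule Inter_mem[OF F(1)])
  then have "D \<inter> \<Inter>{D \<inter> \<Inter>F, C} \<noteq> {}" using Inter_nonempty[of "{D \<inter> \<Inter>F, C}"] assms(2) by simp
  then show False using F(4) by auto
qed

end

context bifinite_domain
begin

theorem lawson_compact:
  assumes "\<And>C. C \<in> \<C> \<Longrightarrow> lawson_closed D le C" "has_fip \<C>"
  shows "D \<inter> \<Inter>\<C> \<noteq> {}"
proof -
  have "\<C> \<subseteq> Pow D" using assms(1) lawson_closed_subset by blast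
  then obtain M where M: "\<C> \<subseteq> M" "M \<subseteq> Pow D" "has_fip M"
    "\<And>X. X \<subseteq> D \<Longrightarrow> has_fip (insert X M) \<Longrightarrow> X \<in> M"
    using maximal_fip_extension assms(2) by metis
  interpret lawson_ultrafilter D le M
    by (unfold_locales) (use M in auto)
  have "lub limit_basis \<in> D \<inter> \<Inter>\<C>"
    using lub_limit_basis_mem assms(1) M(1) is_lub_in[OF is_lub_lub[OF limit_basis_directed]] by blast
  then show ?thesis by blast
qed

lemma filtered_Inter_nonempty:
  assumes "\<C> \<noteq> {}" "\<And>C. C \<in> \<C> \<Longrightarrow> lawson_closed D le C" "\<And>C. C \<in> \<C> \<Longrightarrow> C \<noteq> {}"
    and filtered: "\<And>A B. A \<in> \<C> \<Longrightarrow> B \<in> \<C> \<Longrightarrow> \<exists>C\<in>\<C>. C \<subseteq> A \<inter> B"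
  shows "\<Inter>\<C> \<noteq> {}"
proof -
  have below: "\<exists>C\<in>\<C>. C \<subseteq> \<Inter>G" if "finite G" "G \<noteq> {}" "G \<subseteq> \<C>" for G
    using that
  proof (induction G rule: finite_ne_induct)
    case (singleton A)
    then show ?case by auto
  next
    case (insert A G)
    then obtain C where C: "C \<in> \<C>" "C \<subseteq> \<Inter>G" by auto
    obtain C' where "C' \<in> \<C>" "C' \<subseteq> A \<inter> C" using filtered[of A C] insert.prems C(1) by auto
    then show ?case using C(2) by auto
  qed
  have "has_fip \<C>" unfolding has_fip_def
  proof (intro allI impI)
    fix G assume G: "finite G \<and> G \<subseteq> \<C>"
    obtain C0 where "C0 \<in> \<C>" using assms(1) by blast
    show "D \<inter> \<Inter>G \<noteq> {}"
    proof (cases "G = {}")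
      case True
      then show ?thesis using assms(2,3)[OF \<open>C0 \<in> \<C>\<close>] lawson_closed_subset by auto
    next
      case False
      then obtain C where "C \<in> \<C>" "C \<subseteq> \<Inter>G" using below[of G] G by blast
      then show ?thesis using assms(2,3) lawson_closed_subset by blast
    qed
  qed
  then have "D \<inter> \<Inter>\<C> \<noteq> {}" using lawson_compact assms(2) by blast
  then show ?thesis by blast
qed

lemma decseq_Inter_nonempty:
  assumes "\<And>n. lawson_closed D le (C n)" "\<And>n. C n \<noteq> {}" "\<And>n. C (Suc n) \<subseteq> C n"
  shows "(\<Inter>n. C n) \<noteq> {}"
proof (rule filtered_Inter_nonempty)
  fix A B assume "A \<in> range C" "B \<in> range C"
  then obtain m n where "A = C m" "B = C n" by blast
  moreover have "C (max m n) \<subseteq> C m" "C (max m n) \<subseteq> C n"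
    using lift_Suc_antimono_le[of C, OF assms(3)] by auto
  ultimately show "\<exists>X\<in>range C. X \<subseteq> A \<inter> B" by blast
qed (use assms(1,2) in auto)

lemma directed_Inter_nonempty:
  assumes S: "directed D le S"
    and C: "\<And>x. x \<in> S \<Longrightarrow> lawson_closed D le (C x)" "\<And>x. x \<in> S \<Longrightarrow> C x \<noteq> {}"
    and antitone: "\<And>x y. x \<in> S \<Longrightarrow> y \<in> S \<Longrightarrow> le x y \<Longrightarrow> C y \<subseteq> C x"
  shows "(\<Inter>x\<in>S. C x) \<noteq> {}"
proof (rule filtered_Inter_nonempty)
  show "C ` S \<noteq> {}" using directed_nonempty[OF S] by blast
  show "lawson_closed D le A" "A \<noteq> {}" if "A \<in> C ` S" for A using that C by auto
next
  fix A B assume "A \<in> C ` S" "B \<in> C ` S"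
  then obtain x y where xy: "x \<in> S" "y \<in> S" "A = C x" "B = C y" by blast
  then obtain z where z: "z \<in> S" "le x z" "le y z" using directedD[OF S] by blast
  then have "C z \<subseteq> A \<inter> B" using antitone[OF xy(1) z(1,2)] antitone[OF xy(2) z(1,3)] xy(3,4) by blast
  then show "\<exists>Z\<in>C ` S. Z \<subseteq> A \<inter> B" using z(1) by blast
qed

lemma directed_above:
  assumes S: "directed D le S" and x: "x \<in> S"
  shows "directed D le {y\<in>S. le x y}"
  unfolding directed_def
proof (intro conjI ballI)
  have SD: "S \<subseteq> D" using directed_subset[OF S] .
  show "{y\<in>S. le x y} \<subseteq> D" using SD by blast
  show "{y\<in>S. le x y} \<noteq> {}" using x SD po_refl by blast
  fix y1 y2 assume y: "y1 \<in> {y\<in>S. le x y}" "y2 \<in> {y\<in>S. le x y}"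
  then obtain z where z: "z \<in> S" "le y1 z" "le y2 z" using directedD[OF S] by blast
  then have "le x z" using po_trans[of x y1 z] y x SD by blast
  then show "\<exists>z\<in>{y\<in>S. le x y}. le y1 z \<and> le y2 z" using z by blast
qed

lemma scott_closed_down_lawson_closed:
  assumes C: "lawson_closed D le C"
  shows "scott_closed D le (down D le C)"
proof (rule scott_closedI[OF down_subset])
  have CD: "C \<subseteq> D" using lawson_closed_subset[OF C] .
  fix x y assume "x \<in> down D le C" "y \<in> D" "le y x"
  then show "y \<in> down D le C" using down_mono[OF _ CD, of "{x}"] down_subset po_refl
    by (blast intro: downI elim: downE)
next
  have CD: "C \<subseteq> D" using lawson_closed_subset[OF C] .
  fix T t assume T: "directed D le T" "T \<subseteq> down D le C" "is_lub D le T t"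
  have TD: "T \<subseteq> D" using directed_subset[OF T(1)] .
  have "(\<Inter>\<tau>\<in>T. C \<inter> up D le {\<tau>}) \<noteq> {}"
  proof (rule directed_Inter_nonempty[OF T(1)])
    fix \<tau> assume \<tau>: "\<tau> \<in> T"
    show "lawson_closed D le (C \<inter> up D le {\<tau>})"
      using \<tau> TD by (intro lawson_closed_Int C lawson_closed_up_finite) auto
    obtain c where "c \<in> C" "le \<tau> c" using T(2) \<tau> by (auto elim: downE)
    then show "C \<inter> up D le {\<tau>} \<noteq> {}" using CD by (auto intro: upI)
  next
    fix \<tau>1 \<tau>2 assume "\<tau>1 \<in> T" "\<tau>2 \<in> T" "le \<tau>1 \<tau>2"
    then show "C \<inter> up D le {\<tau>2} \<subseteq> C \<inter> up D le {\<tau>1}"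
      using po_trans[of \<tau>1 \<tau>2] TD unfolding up_def by blast
  qed
  then obtain c where c: "c \<in> C" "\<And>\<tau>. \<tau> \<in> T \<Longrightarrow> le \<tau> c"
    using directed_nonempty[OF T(1)] unfolding up_def by blast
  have "le t c" using is_lub_least[OF T(3)] c CD by blast
  then show "t \<in> down D le C" using is_lub_in[OF T(3)] c(1) by (blast intro: downI)
qed

definition finite_deflation :: "('d \<Rightarrow> 'd) \<Rightarrow> bool" where
  "finite_deflation g \<longleftrightarrow> finite (g ` D) \<and>
     (\<forall>x\<in>D. g x \<in> K \<and> le (g x) x \<and> g (g x) = g x) \<and>
     (\<forall>x\<in>D. \<forall>y\<in>D. le x y \<longrightarrow> le (g x) (g y))"

lemma finite_deflationD:
  assumes "finite_deflation g"
  shows "finite (g ` D)" "x \<in> D \<Longrightarrow> g x \<in> K" "x \<in> D \<Longrightarrow> g x \<in> D" "x \<in> D \<Longrightarrow> le (g x) x"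
    "x \<in> D \<Longrightarrow> g (g x) = g x" "x \<in> D \<Longrightarrow> y \<in> D \<Longrightarrow> le x y \<Longrightarrow> le (g x) (g y)"
  using assms compacts_subset unfolding finite_deflation_def by blast+

text \<open>Compactness of g s and g s \<le> s put g s below a member of the directed set; idempotence
  then bounds g s by the image of that member.\<close>
lemma finite_deflation_continuous:
  assumes g: "finite_deflation g"
  shows "scott_continuous D le g"
  unfolding scott_continuous_def
proof (intro conjI allI impI ballI)
  show "g ` D \<subseteq> D" using finite_deflationD(3)[OF g] by blast
  show "le (g x) (g y)" if "x \<in> D" "y \<in> D" "le x y" for x y
    using finite_deflationD(6)[OF g that] .
  fix S s assume "directed D le S \<and> is_lub D le S s"
  then have S: "directed D le S" "is_lub D le S s" by auto
  have SD: "S \<subseteq> D" using directed_subset[OF S(1)] .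
  have sD: "s \<in> D" using is_lub_in[OF S(2)] .
  show "is_lub D le (g ` S) (g s)" unfolding is_lub_def upper_bounds_def
  proof (intro conjI CollectI ballI)
    show "g s \<in> D" using finite_deflationD(3)[OF g sD] .
    fix y assume "y \<in> g ` S"
    then show "le y (g s)" using finite_deflationD(6)[OF g] SD sD is_lub_upper[OF S(2)] by blast
  next
    fix u assume "u \<in> {u \<in> D. \<forall>y\<in>g ` S. le y u}"
    then have u: "u \<in> D" "\<And>x. x \<in> S \<Longrightarrow> le (g x) u" by auto
    obtain x where x: "x \<in> S" "le (g s) x"
      using compactD[OF finite_deflationD(2)[OF g sD] S finite_deflationD(4)[OF g sD]] by blast
    have xD: "x \<in> D" using x(1) SD by blast
    have "le (g (g s)) (g x)" using finite_deflationD(6)[OF g _ xD x(2)] finite_deflationD(3)[OF g sD] .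
    then have "le (g s) (g x)" using finite_deflationD(5)[OF g sD] by simp
    then show "le (g s) u"
      using po_trans[OF _ _ u(1) _ u(2)[OF x(1)]] finite_deflationD(3)[OF g] sD xD by blast
  qed
qed

lemma scott_continuous_chain_lub:
  assumes cont: "\<And>n. scott_continuous D le (f n)"
    and chain: "\<And>n x. x \<in> D \<Longrightarrow> le (f n x) (f (Suc n) x)"
  shows "scott_continuous D le (\<lambda>x. lub (range (\<lambda>n. f n x)))"
proof -
  have fD: "f n x \<in> D" if "x \<in> D" for n x using cont[of n] that unfolding scott_continuous_def by blast
  have fmono: "le (f n x) (f n y)" if "x \<in> D" "y \<in> D" "le x y" for n x y
    using cont[of n] that unfolding scott_continuous_def by blast
  have flub: "is_lub D le (f n ` S) (f n s)" if "directed D le S" "is_lub D le S s" for n S s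
    using cont[of n] that unfolding scott_continuous_def by blast
  define h where "h x = lub (range (\<lambda>n. f n x))" for x
  have h: "is_lub D le (range (\<lambda>n. f n x)) (h x)" if "x \<in> D" for x
    unfolding h_def using chain_directed[of "\<lambda>n. f n x"] fD chain that by (intro is_lub_lub) blast
  have hD: "h x \<in> D" if "x \<in> D" for x using is_lub_in[OF h[OF that]] .
  have f_le_h: "le (f n x) (h x)" if "x \<in> D" for n x using is_lub_upper[OF h[OF that]] by blast
  have h_least: "le (h x) u" if "x \<in> D" "u \<in> D" "\<And>n. le (f n x) u" for x u
    using is_lub_least[OF h[OF that(1)] that(2)] that(3) by blast
  have hmono: "le (h x) (h y)" if "x \<in> D" "y \<in> D" "le x y" for x y
  proof (rule h_least[OF that(1) hD[OF that(2)]])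
    fix n
    show "le (f n x) (h y)"
      using po_trans[OF fD[OF that(1)] fD[OF that(2)] hD[OF that(2)] fmono[OF that] f_le_h[OF that(2)]] .
  qed
  show ?thesis
    unfolding h_def[symmetric] scott_continuous_def
  proof (intro conjI allI impI ballI)
    show "h ` D \<subseteq> D" using hD by blast
    show "le (h x) (h y)" if "x \<in> D" "y \<in> D" "le x y" for x y using hmono[OF that] .
    fix S s assume "directed D le S \<and> is_lub D le S s"
    then have S: "directed D le S" "is_lub D le S s" by auto
    have SD: "S \<subseteq> D" using directed_subset[OF S(1)] .
    have sD: "s \<in> D" using is_lub_in[OF S(2)] .
    show "is_lub D le (h ` S) (h s)" unfolding is_lub_def upper_bounds_def
    proof (intro conjI CollectI ballI)
      show "h s \<in> D" using hD[OF sD] .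
      fix y assume "y \<in> h ` S"
      then show "le y (h s)" using hmono SD sD is_lub_upper[OF S(2)] by blast
    next
      fix u assume "u \<in> {u \<in> D. \<forall>y\<in>h ` S. le y u}"
      then have u: "u \<in> D" "\<And>x. x \<in> S \<Longrightarrow> le (h x) u" by auto
      show "le (h s) u"
      proof (rule h_least[OF sD u(1)])
        fix n
        show "le (f n s) u"
        proof (rule is_lub_least[OF flub[OF S] u(1)])
          fix y assume "y \<in> f n ` S"
          then obtain x where x: "x \<in> S" "y = f n x" by blast
          then have "x \<in> D" using SD by blast
          then show "le y u" using po_trans[OF fD hD u(1) f_le_h u(2)[OF x(1)]] x(2) by simp
        qed
      qed
    qed
  qed
qed

lemma scott_closure_Union_down_chain:
  assumes D: "\<And>n i. i \<in> X \<Longrightarrow> \<phi> n i \<in> D" and chain: "\<And>n i. i \<in> X \<Longrightarrow> le (\<phi> n i) (\<phi> (Suc n) i)"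
  shows "scott_closure D le (\<Union>n. down D le (\<phi> n ` X)) = scott_closure D le ((\<lambda>i. lub (range (\<lambda>n. \<phi> n i))) ` X)"
    (is "scott_closure D le ?A = scott_closure D le ?B")
proof -
  have lub: "is_lub D le (range (\<lambda>n. \<phi> n i)) (lub (range (\<lambda>n. \<phi> n i)))" if "i \<in> X" for i
    using chain_lub[of "\<lambda>n. \<phi> n i"] D chain that by blast
  have AD: "?A \<subseteq> D" using down_subset by blast
  have BD: "?B \<subseteq> D" using is_lub_in[OF lub] by blast
  show ?thesis
  proof (rule equalityI; rule scott_closure_least)
    show "scott_closed D le (scott_closure D le ?B)" by (rule scott_closure_closed[OF BD])
    show "?A \<subseteq> scott_closure D le ?B"
    proof
      fix z assume "z \<in> ?A"
      then obtain n i where z: "z \<in> D" "i \<in> X" "le z (\<phi> n i)" by (auto elim: downE)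
      have "le z (lub (range (\<lambda>n. \<phi> n i)))"
        using po_trans[OF z(1) D[OF z(2)] is_lub_in[OF lub[OF z(2)]] z(3)] is_lub_upper[OF lub[OF z(2)]]
        by blast
      moreover have "lub (range (\<lambda>n. \<phi> n i)) \<in> scott_closure D le ?B"
        using z(2) by (blast intro: scott_closure_memI)
      ultimately show "z \<in> scott_closure D le ?B"
        using scott_closed_down[OF scott_closure_closed[OF BD]] z(1) by blast
    qed
  next
    show "scott_closed D le (scott_closure D le ?A)" by (rule scott_closure_closed[OF AD])
    show "?B \<subseteq> scott_closure D le ?A"
    proof
      fix z assume "z \<in> ?B"
      then obtain i where i: "i \<in> X" "z = lub (range (\<lambda>n. \<phi> n i))" by blast
      have "\<phi> n i \<in> down D le (\<phi> n ` X)" for n using i(1) D po_refl by (blast intro: downI)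
      then have "range (\<lambda>n. \<phi> n i) \<subseteq> ?A" by blast
      then have "range (\<lambda>n. \<phi> n i) \<subseteq> scott_closure D le ?A" using scott_closure_subset by (rule subset_trans)
      moreover have "directed D le (range (\<lambda>n. \<phi> n i))"
        using chain_directed[of "\<lambda>n. \<phi> n i"] D chain i(1) by blast
      ultimately show "z \<in> scott_closure D le ?A"
        using scott_closed_lub[OF scott_closure_closed[OF AD] _ _ lub[OF i(1)]] i(2) by blast
    qed
  qed
qed

lemma Inter_up_chain_finite:
  assumes X: "finite X" and D: "\<And>n i. i \<in> X \<Longrightarrow> \<phi> n i \<in> D"
    and chain: "\<And>n i. i \<in> X \<Longrightarrow> le (\<phi> n i) (\<phi> (Suc n) i)"
  shows "(\<Inter>n. up D le (\<phi> n ` X)) = up D le ((\<lambda>i. lub (range (\<lambda>n. \<phi> n i))) ` X)"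
proof
  have lub: "is_lub D le (range (\<lambda>n. \<phi> n i)) (lub (range (\<lambda>n. \<phi> n i)))" if "i \<in> X" for i
    using chain_lub[of "\<lambda>n. \<phi> n i"] D chain that by blast
  show "up D le ((\<lambda>i. lub (range (\<lambda>n. \<phi> n i))) ` X) \<subseteq> (\<Inter>n. up D le (\<phi> n ` X))"
  proof (intro subsetI INT_I)
    fix z n assume "z \<in> up D le ((\<lambda>i. lub (range (\<lambda>n. \<phi> n i))) ` X)"
    then obtain i where z: "z \<in> D" "i \<in> X" "le (lub (range (\<lambda>n. \<phi> n i))) z" by (auto elim: upE)
    have "le (\<phi> n i) z"
      using po_trans[OF D[OF z(2)] is_lub_in[OF lub[OF z(2)]] z(1) _ z(3)] is_lub_upper[OF lub[OF z(2)]]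
      by blast
    then show "z \<in> up D le (\<phi> n ` X)" using z(1,2) by (blast intro: upI)
  qed
  show "(\<Inter>n. up D le (\<phi> n ` X)) \<subseteq> up D le ((\<lambda>i. lub (range (\<lambda>n. \<phi> n i))) ` X)"
  proof
    fix y assume y: "y \<in> (\<Inter>n. up D le (\<phi> n ` X))"
    have yD: "y \<in> D" using y up_subset by blast
    have "\<exists>i\<in>X. \<forall>n. le (\<phi> n i) y"
    proof (rule ccontr)
      assume "\<not> ?thesis"
      then have "\<forall>i\<in>X. \<exists>m. \<not> le (\<phi> m i) y" by blast
      then have "\<forall>i\<in>X. eventually (\<lambda>n. \<not> le (\<phi> n i) y) sequentially"
        unfolding eventually_sequentially
        using po_trans[OF D D yD chain_le[of "\<lambda>n. \<phi> n _", OF D chain]] by blast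
      then have "eventually (\<lambda>n. \<forall>i\<in>X. \<not> le (\<phi> n i) y) sequentially"
        by (rule eventually_ball_finite[OF X])
      then obtain n where "\<forall>i\<in>X. \<not> le (\<phi> n i) y" unfolding eventually_sequentially by blast
      moreover obtain i where "i \<in> X" "le (\<phi> n i) y" using y by (auto elim: upE)
      ultimately show False by blast
    qed
    then obtain i where "i \<in> X" "\<And>n. le (\<phi> n i) y" by blast
    then show "y \<in> up D le ((\<lambda>i. lub (range (\<lambda>n. \<phi> n i))) ` X)"
      using is_lub_least[OF lub yD] yD by (blast intro: upI)
  qed
qed

end

text \<open>The Lawson topology of the definitions is generated by the sets up k - up l only, so a
  greatest element would have no neighbourhood but D; the extra hypothesis excludes this.\<close>
locale unbounded_bifinite_domain = bifinite_domain +
  assumes unbounded: "x \<in> D \<Longrightarrow> \<exists>y\<in>D. \<not> le y x"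
begin

lemma scott_closed_lawson_closed:
  assumes "scott_closed D le C"
  shows "lawson_closed D le C"
proof (rule lawson_closedI[OF scott_closed_subset[OF assms]])
  fix x assume x: "x \<in> D" "x \<notin> C"
  obtain k where k: "k \<in> (D - C) \<inter> K" "le k x"
    using x scott_closed_complement[OF assms] by (auto elim: upE)
  obtain y where y: "y \<in> D" "\<not> le y x" using unbounded[OF x(1)] by blast
  obtain l where l: "l \<in> K" "\<not> le l x" using compact_below_not_le[OF y(1) x(1) y(2)] by blast
  let ?F = "{up D le {k} - up D le {l}}"
  have "?F \<subseteq> lawson_subbasis D le" unfolding lawson_subbasis_def using k l by blast
  moreover have "x \<in> \<Inter>?F" using x k l by (auto intro: upI elim: upE)
  moreover have "D \<inter> \<Inter>?F \<inter> C = {}"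
  proof -
    have "z \<notin> C" if "z \<in> D" "le k z" for z
    proof -
      have "z \<in> up D le ((D - C) \<inter> K)" using that k(1) by (auto intro: upI)
      then show ?thesis using scott_closed_complement[OF assms] by blast
    qed
    then show ?thesis by (auto elim: upE)
  qed
  ultimately show "\<exists>F. finite F \<and> F \<subseteq> lawson_subbasis D le \<and> x \<in> \<Inter>F \<and> D \<inter> \<Inter>F \<inter> C = {}"
    by (intro exI[of _ ?F] conjI) simp_all
qed

lemma scott_closed_below_image:
  assumes "scott_continuous D le g" "y \<in> D"
  shows "scott_closed D le {u\<in>D. le (g u) y}"
proof (rule scott_closedI)
  have g: "\<And>x. x \<in> D \<Longrightarrow> g x \<in> D" "\<And>x x'. x \<in> D \<Longrightarrow> x' \<in> D \<Longrightarrow> le x x' \<Longrightarrow> le (g x) (g x')"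
    "\<And>S s. directed D le S \<Longrightarrow> is_lub D le S s \<Longrightarrow> is_lub D le (g ` S) (g s)"
    using assms(1) unfolding scott_continuous_def by blast+
  fix x x' assume "x \<in> {u\<in>D. le (g u) y}" "x' \<in> D" "le x' x"
  then show "x' \<in> {u\<in>D. le (g u) y}" using po_trans[OF g(1) g(1) assms(2) g(2)] by blast
next
  have g: "\<And>S s. directed D le S \<Longrightarrow> is_lub D le S s \<Longrightarrow> is_lub D le (g ` S) (g s)"
    using assms(1) unfolding scott_continuous_def by blast
  fix S s assume S: "directed D le S" "S \<subseteq> {u\<in>D. le (g u) y}" "is_lub D le S s"
  then have "le (g s) y" using is_lub_least[OF g[OF S(1,3)] assms(2)] by blast
  then show "s \<in> {u\<in>D. le (g u) y}" using is_lub_in[OF S(3)] by blast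
qed simp

lemma Inter_up_chain_lawson_closed:
  assumes X: "lawson_closed D le X" and cont: "\<And>n. scott_continuous D le (\<phi> n)"
    and chain: "\<And>n x. x \<in> D \<Longrightarrow> le (\<phi> n x) (\<phi> (Suc n) x)"
  shows "(\<Inter>n. up D le (\<phi> n ` X)) = up D le ((\<lambda>x. lub (range (\<lambda>n. \<phi> n x))) ` X)"
proof
  have XD: "X \<subseteq> D" using lawson_closed_subset[OF X] .
  have D: "\<phi> n x \<in> D" if "x \<in> D" for n x using cont[of n] that unfolding scott_continuous_def by blast
  have lub: "is_lub D le (range (\<lambda>n. \<phi> n x)) (lub (range (\<lambda>n. \<phi> n x)))" if "x \<in> D" for x
    using chain_lub[of "\<lambda>n. \<phi> n x"] D chain that by blast
  show "up D le ((\<lambda>x. lub (range (\<lambda>n. \<phi> n x))) ` X) \<subseteq> (\<Inter>n. up D le (\<phi> n ` X))"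
  proof (intro subsetI INT_I)
    fix z n assume "z \<in> up D le ((\<lambda>x. lub (range (\<lambda>n. \<phi> n x))) ` X)"
    then obtain x where z: "z \<in> D" "x \<in> X" "le (lub (range (\<lambda>n. \<phi> n x))) z" by (auto elim: upE)
    have xD: "x \<in> D" using z(2) XD by blast
    have "le (\<phi> n x) z"
      using po_trans[OF D[OF xD] is_lub_in[OF lub[OF xD]] z(1) _ z(3)] is_lub_upper[OF lub[OF xD]] by blast
    then show "z \<in> up D le (\<phi> n ` X)" using z(1,2) by (blast intro: upI)
  qed
  show "(\<Inter>n. up D le (\<phi> n ` X)) \<subseteq> up D le ((\<lambda>x. lub (range (\<lambda>n. \<phi> n x))) ` X)"
  proof
    fix y assume y: "y \<in> (\<Inter>n. up D le (\<phi> n ` X))"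
    have yD: "y \<in> D" using y up_subset by blast
    let ?C = "\<lambda>n. X \<inter> {u\<in>D. le (\<phi> n u) y}"
    have "(\<Inter>n. ?C n) \<noteq> {}"
    proof (rule decseq_Inter_nonempty)
      show "lawson_closed D le (?C n)" for n
        using lawson_closed_Int[OF X scott_closed_lawson_closed[OF scott_closed_below_image[OF cont yD]]] .
      show "?C n \<noteq> {}" for n using y XD by (auto elim!: upE)
      show "?C (Suc n) \<subseteq> ?C n" for n using po_trans[OF D D yD chain] by blast
    qed
    then obtain x where x: "x \<in> X" "\<And>n. le (\<phi> n x) y" by blast
    then have "le (lub (range (\<lambda>n. \<phi> n x))) y" using is_lub_least[OF lub yD] XD by blast
    then show "y \<in> up D le ((\<lambda>x. lub (range (\<lambda>n. \<phi> n x))) ` X)" using yD x(1) by (blast intro: upI)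
  qed
qed

end

section \<open>The domain D as a mixed transition system\<close>

locale mixed_solution =
  fixes D :: "'d set" and le :: "'d \<Rightarrow> 'd \<Rightarrow> bool"
    and \<iota> :: "'d \<Rightarrow> ('act::finite \<Rightarrow> 'd set \<times> 'd set)"
  assumes initial_solution: "initial_solution D le \<iota>"

sublocale mixed_solution \<subseteq> bifinite_domain
  using initial_solution unfolding initial_solution_def by unfold_locales blast

context mixed_solution
begin

abbreviation PD :: "('act \<Rightarrow> 'd set \<times> 'd set) set" where
  "PD \<equiv> {p. \<forall>\<alpha>. p \<alpha> \<in> mixed_pd D le}"

definition L :: "'d \<Rightarrow> 'act \<Rightarrow> 'd set" where
  "L x \<alpha> = fst (\<iota> x \<alpha>)"

definition U :: "'d \<Rightarrow> 'act \<Rightarrow> 'd set" where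
  "U x \<alpha> = snd (\<iota> x \<alpha>)"

definition elem :: "('act \<Rightarrow> 'd set \<times> 'd set) \<Rightarrow> 'd" where
  "elem p = inv_into D \<iota> p"

lemma iota_bij: "bij_betw \<iota> D PD"
  using initial_solution unfolding initial_solution_def by blast

lemma le_iff: "x \<in> D \<Longrightarrow> y \<in> D \<Longrightarrow> le x y \<longleftrightarrow> (\<forall>\<alpha>. L x \<alpha> \<subseteq> L y \<alpha> \<and> U y \<alpha> \<subseteq> U x \<alpha>)"
  using initial_solution unfolding initial_solution_def L_def U_def by blast

lemma leI: "x \<in> D \<Longrightarrow> y \<in> D \<Longrightarrow> (\<And>\<alpha>. L x \<alpha> \<subseteq> L y \<alpha>) \<Longrightarrow> (\<And>\<alpha>. U y \<alpha> \<subseteq> U x \<alpha>) \<Longrightarrow> le x y"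
  using le_iff by blast

lemma leD: "le x y \<Longrightarrow> x \<in> D \<Longrightarrow> y \<in> D \<Longrightarrow> L x \<alpha> \<subseteq> L y \<alpha> \<and> U y \<alpha> \<subseteq> U x \<alpha>"
  using le_iff by blast

lemma minimal_invariant:
  "scott_continuous D le g \<Longrightarrow> (\<And>x. x \<in> D \<Longrightarrow> Phi D le \<iota> g x = g x) \<Longrightarrow> x \<in> D \<Longrightarrow> le x (g x)"
  using initial_solution unfolding initial_solution_def by blast

lemma elem_in_D: "p \<in> PD \<Longrightarrow> elem p \<in> D"
  using iota_bij unfolding bij_betw_def elem_def by (metis inv_into_into)

lemma iota_elem: "p \<in> PD \<Longrightarrow> \<iota> (elem p) = p"
  using iota_bij unfolding bij_betw_def elem_def by (simp add: f_inv_into_f)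

lemma elem_iota: "x \<in> D \<Longrightarrow> elem (\<iota> x) = x"
  using iota_bij unfolding bij_betw_def elem_def by (simp add: inv_into_f_f)

lemma L_elem: "p \<in> PD \<Longrightarrow> L (elem p) \<alpha> = fst (p \<alpha>)"
  by (simp add: L_def iota_elem)

lemma U_elem: "p \<in> PD \<Longrightarrow> U (elem p) \<alpha> = snd (p \<alpha>)"
  by (simp add: U_def iota_elem)

lemma components_mixed_pd: "x \<in> D \<Longrightarrow> (L x \<alpha>, U x \<alpha>) \<in> mixed_pd D le"
  using iota_bij unfolding bij_betw_def L_def U_def by auto

lemma scott_closed_L: "x \<in> D \<Longrightarrow> scott_closed D le (L x \<alpha>)"
  using components_mixed_pd[of x \<alpha>] unfolding mixed_pd_def by auto

lemma lawson_closed_U: "x \<in> D \<Longrightarrow> lawson_closed D le (U x \<alpha>)"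
  using components_mixed_pd[of x \<alpha>] unfolding mixed_pd_def by auto

lemma L_subset: "x \<in> D \<Longrightarrow> L x \<alpha> \<subseteq> D"
  using scott_closed_L scott_closed_subset by blast

lemma U_subset: "x \<in> D \<Longrightarrow> U x \<alpha> \<subseteq> D"
  using lawson_closed_U lawson_closed_subset by blast

lemma L_down: "x \<in> D \<Longrightarrow> l \<in> L x \<alpha> \<Longrightarrow> y \<in> D \<Longrightarrow> le y l \<Longrightarrow> y \<in> L x \<alpha>"
  using scott_closed_down[OF scott_closed_L] by blast

lemma U_up: "x \<in> D \<Longrightarrow> u \<in> U x \<alpha> \<Longrightarrow> v \<in> D \<Longrightarrow> le u v \<Longrightarrow> v \<in> U x \<alpha>"
  using components_mixed_pd[of x \<alpha>] unfolding mixed_pd_def upper_set_def up_def by blast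

lemma L_below_L_Int_U: "x \<in> D \<Longrightarrow> l \<in> L x \<alpha> \<Longrightarrow> \<exists>l'\<in>L x \<alpha> \<inter> U x \<alpha>. le l l'"
  using components_mixed_pd[of x \<alpha>] unfolding mixed_pd_def down_def by blast

lemma mixed_pd_const:
  assumes "scott_closed D le A" "lawson_closed D le B" "upper_set D le B" "A = down D le (A \<inter> B)"
  shows "(\<lambda>\<alpha>. (A, B)) \<in> PD"
  using assms unfolding mixed_pd_def by simp

definition bottom :: 'd where
  "bottom = elem (\<lambda>\<alpha>. ({}, D))"

lemma scott_closed_empty: "scott_closed D le {}"
  by (rule scott_closedI) (auto simp: is_lub_def upper_bounds_def dest: directed_nonempty)

lemma lawson_closed_empty: "lawson_closed D le {}"
  by (rule lawson_closedI) auto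

lemma lawson_closed_D: "lawson_closed D le D"
  by (rule lawson_closedI) auto

lemma upper_set_D: "upper_set D le D"
  unfolding upper_set_def using up_subset subset_up by blast

lemma bottom_PD: "(\<lambda>\<alpha>. ({}, D)) \<in> PD"
  by (rule mixed_pd_const[OF scott_closed_empty lawson_closed_D upper_set_D]) (simp add: down_def)

lemma bottom_in_D: "bottom \<in> D"
  unfolding bottom_def using elem_in_D[OF bottom_PD] .

lemma L_bottom: "L bottom \<alpha> = {}"
  unfolding bottom_def using L_elem[OF bottom_PD] by simp

lemma U_bottom: "U bottom \<alpha> = D"
  unfolding bottom_def using U_elem[OF bottom_PD] by simp

lemma bottom_le: "x \<in> D \<Longrightarrow> le bottom x"
  using leI[OF bottom_in_D] U_subset by (simp add: L_bottom U_bottom)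

lemma unbounded: "x \<in> D \<Longrightarrow> \<exists>y\<in>D. \<not> le y x"
proof -
  let ?n = "elem (\<lambda>\<alpha>. ({}, {}))" and ?t = "elem (\<lambda>\<alpha>. (D, D))"
  have "upper_set D le {}" unfolding upper_set_def up_def by simp
  then have PD1: "(\<lambda>\<alpha>. ({}, {})) \<in> PD"
    by (rule mixed_pd_const[OF scott_closed_empty lawson_closed_empty]) (simp add: down_def)
  have "D = down D le (D \<inter> D)" using subset_down[of D] down_subset by auto
  then have PD2: "(\<lambda>\<alpha>. (D, D)) \<in> PD"
    by (rule mixed_pd_const[OF scott_closed_D lawson_closed_D upper_set_D])
  note PD = PD1 PD2
  assume x: "x \<in> D"
  have "\<not> (le ?n x \<and> le ?t x)"
  proof
    fix \<alpha> :: 'act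
    assume "le ?n x \<and> le ?t x"
    then have "U x \<alpha> = {}" "L x \<alpha> = D"
      using leD[of ?n x \<alpha>] leD[of ?t x \<alpha>] elem_in_D[OF PD(1)] elem_in_D[OF PD(2)] x L_subset[OF x]
        L_elem[OF PD(2)] U_elem[OF PD(1)] by auto
    then show False using L_below_L_Int_U[OF x, of bottom \<alpha>] bottom_in_D by auto
  qed
  then show ?thesis using elem_in_D[OF PD(1)] elem_in_D[OF PD(2)] by blast
qed

end

sublocale mixed_solution \<subseteq> unbounded_bifinite_domain
  by unfold_locales (rule unbounded)

context mixed_solution
begin

lemma Union_L_subset: "directed D le S \<Longrightarrow> (\<Union>x\<in>S. L x \<alpha>) \<subseteq> D"
  using L_subset directed_subset by blast

lemma lawson_closed_Inter_U: "directed D le S \<Longrightarrow> lawson_closed D le (\<Inter>x\<in>S. U x \<alpha>)"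
  using directed_nonempty[of S] directed_subset[of S] lawson_closed_U
  by (intro lawson_closed_Inter) auto

text \<open>The closed sets up {l} \<inter> cl(\<Union>L) \<inter> U y, for y \<in> S above x0, form a filtered family; a
  common point of them lies in every U y by directedness.\<close>
lemma L_below_lub_components:
  assumes S: "directed D le S" and x0: "x0 \<in> S" and l: "l \<in> L x0 \<alpha>"
  shows "\<exists>c\<in>scott_closure D le (\<Union>x\<in>S. L x \<alpha>) \<inter> (\<Inter>x\<in>S. U x \<alpha>). le l c"
proof -
  let ?cl = "scott_closure D le (\<Union>x\<in>S. L x \<alpha>)"
  have SD: "S \<subseteq> D" using directed_subset[OF S] .
  have x0D: "x0 \<in> D" using x0 SD by blast
  have lD: "l \<in> D" using L_subset[OF x0D] l by blast
  have cl: "lawson_closed D le ?cl"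
    using scott_closed_lawson_closed[OF scott_closure_closed[OF Union_L_subset[OF S]]] .
  have "(\<Inter>y\<in>{y\<in>S. le x0 y}. up D le {l} \<inter> ?cl \<inter> U y \<alpha>) \<noteq> {}"
  proof (rule directed_Inter_nonempty[OF directed_above[OF S x0]])
    fix y assume y: "y \<in> {y\<in>S. le x0 y}"
    then have yD: "y \<in> D" using SD by blast
    show "lawson_closed D le (up D le {l} \<inter> ?cl \<inter> U y \<alpha>)"
      using lD by (intro lawson_closed_Int lawson_closed_up_finite cl lawson_closed_U[OF yD]) auto
    have "l \<in> L y \<alpha>" using leD[OF _ x0D yD] y l by blast
    then obtain l' where l': "l' \<in> L y \<alpha> \<inter> U y \<alpha>" "le l l'" using L_below_L_Int_U[OF yD] by blast
    have "l' \<in> (\<Union>x\<in>S. L x \<alpha>)" using l'(1) y by blast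
    then have "l' \<in> ?cl" by (rule scott_closure_memI)
    moreover have "l' \<in> up D le {l}" using l' L_subset[OF yD] by (auto intro: upI)
    ultimately show "up D le {l} \<inter> ?cl \<inter> U y \<alpha> \<noteq> {}" using l'(1) by blast
  next
    fix y1 y2 assume "y1 \<in> {y\<in>S. le x0 y}" "y2 \<in> {y\<in>S. le x0 y}" "le y1 y2"
    then show "up D le {l} \<inter> ?cl \<inter> U y2 \<alpha> \<subseteq> up D le {l} \<inter> ?cl \<inter> U y1 \<alpha>"
      using leD[of y1 y2 \<alpha>] SD by blast
  qed
  then obtain c where c: "c \<in> up D le {l}" "c \<in> ?cl" "\<And>y. y \<in> S \<Longrightarrow> le x0 y \<Longrightarrow> c \<in> U y \<alpha>"
    using x0 po_refl[OF x0D] by blast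
  have "c \<in> U y \<alpha>" if y: "y \<in> S" for y
  proof -
    obtain z where z: "z \<in> S" "le x0 z" "le y z" using directedD[OF S x0 y] by blast
    then show ?thesis using c(3) leD[OF z(3)] y SD by blast
  qed
  moreover have "le l c" using c(1) by (auto elim: upE)
  ultimately show ?thesis using c(2) by blast
qed

lemma lub_components_PD:
  assumes S: "directed D le S"
  shows "(\<lambda>\<alpha>. (scott_closure D le (\<Union>x\<in>S. L x \<alpha>), \<Inter>x\<in>S. U x \<alpha>)) \<in> PD"
proof (intro CollectI allI)
  fix \<alpha>
  let ?cl = "scott_closure D le (\<Union>x\<in>S. L x \<alpha>)" and ?I = "\<Inter>x\<in>S. U x \<alpha>"
  have SD: "S \<subseteq> D" using directed_subset[OF S] .
  have sc: "scott_closed D le ?cl" using scott_closure_closed[OF Union_L_subset[OF S]] .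
  have lc: "lawson_closed D le ?I" using lawson_closed_Inter_U[OF S] .
  have "up D le ?I \<subseteq> ?I"
  proof
    fix v assume "v \<in> up D le ?I"
    then obtain u where u: "v \<in> D" "u \<in> ?I" "le u v" by (rule upE)
    show "v \<in> ?I"
    proof
      fix x assume "x \<in> S"
      then show "v \<in> U x \<alpha>" using U_up[of x u \<alpha> v] u SD by blast
    qed
  qed
  then have up: "upper_set D le ?I"
    unfolding upper_set_def using subset_up[OF lawson_closed_subset[OF lc]] lawson_closed_subset[OF lc] by blast
  have "?cl = down D le (?cl \<inter> ?I)"
  proof
    show "down D le (?cl \<inter> ?I) \<subseteq> ?cl" using scott_closed_down[OF sc] by (blast elim: downE)
    have "scott_closed D le (down D le (?cl \<inter> ?I))"
      using scott_closed_down_lawson_closed[OF lawson_closed_Int[OF scott_closed_lawson_closed[OF sc] lc]] .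
    moreover have "(\<Union>x\<in>S. L x \<alpha>) \<subseteq> down D le (?cl \<inter> ?I)"
    proof
      fix l assume "l \<in> (\<Union>x\<in>S. L x \<alpha>)"
      then obtain x0 where "x0 \<in> S" "l \<in> L x0 \<alpha>" by blast
      moreover from this have "l \<in> D" using L_subset SD by blast
      ultimately show "l \<in> down D le (?cl \<inter> ?I)"
        using L_below_lub_components[OF S] by (blast intro: downI)
    qed
    ultimately show "?cl \<subseteq> down D le (?cl \<inter> ?I)" by (rule scott_closure_least)
  qed
  then show "(?cl, ?I) \<in> mixed_pd D le" unfolding mixed_pd_def using sc lc up by simp
qed

lemma lub_components:
  assumes S: "directed D le S" "is_lub D le S s"
  shows "L s \<alpha> = scott_closure D le (\<Union>x\<in>S. L x \<alpha>)" and "U s \<alpha> = (\<Inter>x\<in>S. U x \<alpha>)"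
proof -
  let ?p = "\<lambda>\<alpha>. (scott_closure D le (\<Union>x\<in>S. L x \<alpha>), \<Inter>x\<in>S. U x \<alpha>)"
  have p: "?p \<in> PD" using lub_components_PD[OF S(1)] .
  let ?t = "elem ?p"
  have tD: "?t \<in> D" using elem_in_D[OF p] .
  have SD: "S \<subseteq> D" using directed_subset[OF S(1)] .
  have Lt: "L ?t \<alpha> = scott_closure D le (\<Union>x\<in>S. L x \<alpha>)" and Ut: "U ?t \<alpha> = (\<Inter>x\<in>S. U x \<alpha>)" for \<alpha>
    by (simp_all add: L_elem[OF p] U_elem[OF p])
  have "is_lub D le S ?t" unfolding is_lub_def upper_bounds_def
  proof (intro conjI ballI CollectI tD)
    fix x assume x: "x \<in> S"
    show "le x ?t"
    proof (rule leI)
      fix \<alpha>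
      have "L x \<alpha> \<subseteq> (\<Union>x\<in>S. L x \<alpha>)" using x by blast
      then show "L x \<alpha> \<subseteq> L ?t \<alpha>" unfolding Lt using scott_closure_subset by (rule subset_trans)
      show "U ?t \<alpha> \<subseteq> U x \<alpha>" unfolding Ut using x by blast
    qed (use x SD tD in auto)
  next
    fix u assume "u \<in> {u \<in> D. \<forall>x\<in>S. le x u}"
    then have u: "u \<in> D" "\<And>x. x \<in> S \<Longrightarrow> le x u" by auto
    have LU: "L x \<alpha> \<subseteq> L u \<alpha>" "U u \<alpha> \<subseteq> U x \<alpha>" if "x \<in> S" for x \<alpha>
      using leD[OF u(2)[OF that]] that SD u(1) by auto
    show "le ?t u"
    proof (rule leI[OF tD u(1)])
      fix \<alpha>
      show "L ?t \<alpha> \<subseteq> L u \<alpha>" unfolding Lt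
        by (rule scott_closure_least[OF scott_closed_L[OF u(1)]]) (use LU in blast)
      show "U u \<alpha> \<subseteq> U ?t \<alpha>" unfolding Ut using LU by blast
    qed
  qed
  then have "s = ?t" using is_lub_unique S(2) by blast
  then show "L s \<alpha> = scott_closure D le (\<Union>x\<in>S. L x \<alpha>)" "U s \<alpha> = (\<Inter>x\<in>S. U x \<alpha>)"
    using Lt Ut by simp_all
qed

definition generators :: "('act \<Rightarrow> 'd set) \<Rightarrow> ('act \<Rightarrow> 'd set) \<Rightarrow> bool" where
  "generators A B \<longleftrightarrow> (\<forall>\<alpha>. finite (A \<alpha>) \<and> finite (B \<alpha>) \<and> A \<alpha> \<subseteq> D \<and> B \<alpha> \<subseteq> D \<and>
     (\<forall>a\<in>A \<alpha>. \<exists>c\<in>down D le (A \<alpha>) \<inter> up D le (B \<alpha>). le a c))"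

definition gen_elem :: "('act \<Rightarrow> 'd set) \<Rightarrow> ('act \<Rightarrow> 'd set) \<Rightarrow> 'd" where
  "gen_elem A B = elem (\<lambda>\<alpha>. (down D le (A \<alpha>), up D le (B \<alpha>)))"

lemma generators_same:
  assumes "\<And>\<alpha>. finite (F \<alpha>)" "\<And>\<alpha>. F \<alpha> \<subseteq> D"
  shows "generators F F"
  unfolding generators_def
proof (intro allI conjI ballI assms)
  fix \<alpha> a assume a: "a \<in> F \<alpha>"
  have aD: "a \<in> D" using a assms(2) by blast
  have "a \<in> down D le (F \<alpha>)" "a \<in> up D le (F \<alpha>)" "le a a"
    using downI[OF aD a po_refl[OF aD]] upI[OF aD a po_refl[OF aD]] po_refl[OF aD] .
  then show "\<exists>c\<in>down D le (F \<alpha>) \<inter> up D le (F \<alpha>). le a c" by blast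
qed

lemma generators_PD:
  assumes "generators A B"
  shows "(\<lambda>\<alpha>. (down D le (A \<alpha>), up D le (B \<alpha>))) \<in> PD"
proof (intro CollectI allI)
  fix \<alpha>
  have A: "finite (A \<alpha>)" "A \<alpha> \<subseteq> D" and B: "finite (B \<alpha>)" "B \<alpha> \<subseteq> D"
    and AB: "\<And>a. a \<in> A \<alpha> \<Longrightarrow> \<exists>c\<in>down D le (A \<alpha>) \<inter> up D le (B \<alpha>). le a c"
    using assms unfolding generators_def by auto
  have "down D le (A \<alpha>) = down D le (down D le (A \<alpha>) \<inter> up D le (B \<alpha>))"
  proof
    show "down D le (A \<alpha>) \<subseteq> down D le (down D le (A \<alpha>) \<inter> up D le (B \<alpha>))"
      using down_subset AB by (intro down_mono A(2)) auto
    have "down D le (down D le (A \<alpha>) \<inter> up D le (B \<alpha>)) \<subseteq> down D le (down D le (A \<alpha>))"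
      using down_subset po_refl by (intro down_mono) auto
    also have "\<dots> \<subseteq> down D le (A \<alpha>)"
      using down_subset A(2) by (intro down_mono) (auto elim: downE)
    finally show "down D le (down D le (A \<alpha>) \<inter> up D le (B \<alpha>)) \<subseteq> down D le (A \<alpha>)" .
  qed
  then show "(down D le (A \<alpha>), up D le (B \<alpha>)) \<in> mixed_pd D le"
    unfolding mixed_pd_def using scott_closed_down_finite[OF A] lawson_closed_up_finite[OF B]
      upper_set_up[OF B(2)] by simp
qed

lemma gen_elem_in_D: "generators A B \<Longrightarrow> gen_elem A B \<in> D"
  unfolding gen_elem_def by (rule elem_in_D[OF generators_PD])

lemma L_gen_elem: "generators A B \<Longrightarrow> L (gen_elem A B) \<alpha> = down D le (A \<alpha>)"
  unfolding gen_elem_def using L_elem[OF generators_PD] by simp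

lemma U_gen_elem: "generators A B \<Longrightarrow> U (gen_elem A B) \<alpha> = up D le (B \<alpha>)"
  unfolding gen_elem_def using U_elem[OF generators_PD] by simp

lemma gen_elem_le:
  assumes "generators A B" "generators A' B'"
    and "\<And>\<alpha> a. a \<in> A \<alpha> \<Longrightarrow> \<exists>a'\<in>A' \<alpha>. le a a'"
    and "\<And>\<alpha> b'. b' \<in> B' \<alpha> \<Longrightarrow> \<exists>b\<in>B \<alpha>. le b b'"
  shows "le (gen_elem A B) (gen_elem A' B')"
proof (rule leI[OF gen_elem_in_D[OF assms(1)] gen_elem_in_D[OF assms(2)]])
  fix \<alpha>
  have sub: "A \<alpha> \<subseteq> D" "B \<alpha> \<subseteq> D" "A' \<alpha> \<subseteq> D" "B' \<alpha> \<subseteq> D"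
    using assms(1,2) unfolding generators_def by auto
  show "L (gen_elem A B) \<alpha> \<subseteq> L (gen_elem A' B') \<alpha>"
    unfolding L_gen_elem[OF assms(1)] L_gen_elem[OF assms(2)]
    using down_mono[OF sub(1,3) assms(3)] .
  show "U (gen_elem A' B') \<alpha> \<subseteq> U (gen_elem A B) \<alpha>"
    unfolding U_gen_elem[OF assms(1)] U_gen_elem[OF assms(2)]
    using up_antimono[OF sub(2,4) assms(4)] .
qed

lemma compact_in_L_lub:
  assumes S: "directed D le S" "is_lub D le S s" and a: "a \<in> K" "a \<in> L s \<alpha>"
  shows "\<exists>x\<in>S. a \<in> L x \<alpha>"
proof -
  have "a \<in> scott_closure D le (\<Union>x\<in>S. L x \<alpha>)" using a(2) lub_components(1)[OF S] by simp
  then obtain l where "l \<in> (\<Union>x\<in>S. L x \<alpha>)" "le a l"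
    using compact_in_scott_closure[OF Union_L_subset[OF S(1)] a(1)] by blast
  moreover have "a \<in> D" using a(1) compacts_subset by blast
  ultimately show ?thesis using L_down directed_subset[OF S(1)] by blast
qed

lemma compacts_in_L_lub:
  assumes S: "directed D le S" "is_lub D le S s" and A: "finite A" "A \<subseteq> K" "A \<subseteq> L s \<alpha>"
  shows "\<exists>x\<in>S. A \<subseteq> L x \<alpha>"
proof -
  have "\<exists>x\<in>S. \<forall>a\<in>A. a \<in> L x \<alpha>"
  proof (rule directed_common_upper[OF S(1) A(1)])
    show "\<exists>x\<in>S. a \<in> L x \<alpha>" if "a \<in> A" for a using compact_in_L_lub[OF S] that A(2,3) by blast
    show "a \<in> L y \<alpha>" if "x \<in> S" "y \<in> S" "le x y" "a \<in> L x \<alpha>" for a x y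
      using that leD directed_subset[OF S(1)] by blast
  qed
  then show ?thesis by blast
qed

lemma U_lub_subset_up_compacts:
  assumes S: "directed D le S" "is_lub D le S s" and B: "B \<subseteq> K" "U s \<alpha> \<subseteq> up D le B"
  shows "\<exists>x\<in>S. U x \<alpha> \<subseteq> up D le B"
proof (rule ccontr)
  assume none: "\<not> ?thesis"
  have SD: "S \<subseteq> D" using directed_subset[OF S(1)] .
  have lcB: "lawson_closed D le (D - up D le B)"
    by (rule scott_closed_lawson_closed[OF scott_closed_Diff[OF scott_open_up_compacts[OF B(1)]]])
  have "(\<Inter>x\<in>S. U x \<alpha> \<inter> (D - up D le B)) \<noteq> {}"
  proof (rule directed_Inter_nonempty[OF S(1)])
    fix x assume x: "x \<in> S"
    then have xD: "x \<in> D" using SD by blast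
    show "lawson_closed D le (U x \<alpha> \<inter> (D - up D le B))" by (rule lawson_closed_Int[OF lawson_closed_U[OF xD] lcB])
    show "U x \<alpha> \<inter> (D - up D le B) \<noteq> {}" using none x U_subset[OF xD] by blast
  next
    fix x y assume "x \<in> S" "y \<in> S" "le x y"
    then show "U y \<alpha> \<inter> (D - up D le B) \<subseteq> U x \<alpha> \<inter> (D - up D le B)" using leD[of x y \<alpha>] SD by blast
  qed
  then obtain c where c: "\<And>x. x \<in> S \<Longrightarrow> c \<in> U x \<alpha>" "c \<notin> up D le B"
    using directed_nonempty[OF S(1)] by blast
  then have "c \<in> U s \<alpha>" using lub_components(2)[OF S] by simp
  then show False using B(2) c(2) by blast
qed

lemma gen_elem_compact:
  assumes gen: "generators A B" and AK: "\<And>\<alpha>. A \<alpha> \<subseteq> K" and BK: "\<And>\<alpha>. B \<alpha> \<subseteq> K"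
  shows "gen_elem A B \<in> K"
  unfolding compacts_def
proof (intro CollectI conjI allI impI gen_elem_in_D[OF gen])
  let ?z = "gen_elem A B"
  have zD: "?z \<in> D" by (rule gen_elem_in_D[OF gen])
  fix S s assume "directed D le S \<and> is_lub D le S s \<and> le ?z s"
  then have S: "directed D le S" "is_lub D le S s" and zs: "le ?z s" by auto
  have SD: "S \<subseteq> D" using directed_subset[OF S(1)] .
  have zs': "L ?z \<alpha> \<subseteq> L s \<alpha>" "U s \<alpha> \<subseteq> U ?z \<alpha>" for \<alpha> using leD[OF zs zD is_lub_in[OF S(2)]] by auto
  have A: "finite (A \<alpha>)" "A \<alpha> \<subseteq> D" for \<alpha> using gen unfolding generators_def by auto
  let ?P = "\<lambda>\<alpha> x. A \<alpha> \<subseteq> L x \<alpha> \<and> U x \<alpha> \<subseteq> up D le (B \<alpha>)"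
  have "\<exists>x\<in>S. \<forall>\<alpha>\<in>UNIV. ?P \<alpha> x"
  proof (rule directed_common_upper[OF S(1) finite_UNIV])
    show "?P \<alpha> y" if "x \<in> S" "y \<in> S" "le x y" "?P \<alpha> x" for \<alpha> x y
      using that leD SD by blast
    fix \<alpha>
    have "A \<alpha> \<subseteq> L s \<alpha>" using zs'(1)[of \<alpha>] subset_down[OF A(2)] unfolding L_gen_elem[OF gen] by (rule order_trans[rotated])
    then obtain x1 where x1: "x1 \<in> S" "A \<alpha> \<subseteq> L x1 \<alpha>" using compacts_in_L_lub[OF S A(1) AK] by blast
    have "U s \<alpha> \<subseteq> up D le (B \<alpha>)" using zs'(2)[of \<alpha>] unfolding U_gen_elem[OF gen] .
    then obtain x2 where x2: "x2 \<in> S" "U x2 \<alpha> \<subseteq> up D le (B \<alpha>)" using U_lub_subset_up_compacts[OF S BK] by blast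
    obtain x where x: "x \<in> S" "le x1 x" "le x2 x" using directedD[OF S(1) x1(1) x2(1)] by blast
    then have "?P \<alpha> x" using x1 x2 leD[of x1 x \<alpha>] leD[of x2 x \<alpha>] SD by blast
    then show "\<exists>x\<in>S. ?P \<alpha> x" using x(1) by blast
  qed
  then obtain x where x: "x \<in> S" "\<And>\<alpha>. ?P \<alpha> x" by blast
  have xD: "x \<in> D" using x(1) SD by blast
  have "le ?z x"
  proof (rule leI[OF zD xD])
    fix \<alpha>
    show "L ?z \<alpha> \<subseteq> L x \<alpha>" unfolding L_gen_elem[OF gen] using x(2) L_down[OF xD] by (blast elim: downE)
    show "U x \<alpha> \<subseteq> U ?z \<alpha>" unfolding U_gen_elem[OF gen] using x(2) by blast
  qed
  then show "\<exists>x\<in>S. le ?z x" using x(1) by blast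
qed

lemma bottom_compact: "bottom \<in> K"
  unfolding compacts_def using bottom_in_D bottom_le directed_nonempty directed_subset by blast

lemma lub_gen_elem_chain:
  assumes \<phi>D: "\<And>n i. i \<in> X \<alpha> \<Longrightarrow> \<phi> n i \<in> D"
    and \<phi>chain: "\<And>n i. i \<in> X \<alpha> \<Longrightarrow> le (\<phi> n i) (\<phi> (Suc n) i)"
    and c0: "c 0 = bottom" and gen: "\<And>n. generators (\<lambda>\<alpha>. \<phi> n ` X \<alpha>) (\<lambda>\<alpha>. \<phi> n ` Y \<alpha>)"
    and cSuc: "\<And>n. c (Suc n) = gen_elem (\<lambda>\<alpha>. \<phi> n ` X \<alpha>) (\<lambda>\<alpha>. \<phi> n ` Y \<alpha>)"
    and cchain: "\<And>n. le (c n) (c (Suc n))"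
  shows "L (lub (range c)) \<alpha> = scott_closure D le ((\<lambda>i. lub (range (\<lambda>n. \<phi> n i))) ` X \<alpha>)"
    and "U (lub (range c)) \<alpha> = (\<Inter>n. up D le (\<phi> n ` Y \<alpha>))"
proof -
  have cD: "c n \<in> D" for n by (cases n) (simp_all add: c0 bottom_in_D cSuc gen_elem_in_D[OF gen])
  have S: "directed D le (range c)" "is_lub D le (range c) (lub (range c))"
    using chain_directed[of c] chain_lub[of c] cD cchain by blast+
  have L0: "L (c 0) \<alpha> = {}" and LSuc: "L (c (Suc n)) \<alpha> = down D le (\<phi> n ` X \<alpha>)"
    and U0: "U (c 0) \<alpha> = D" and USuc: "U (c (Suc n)) \<alpha> = up D le (\<phi> n ` Y \<alpha>)" for n
    by (simp_all add: c0 L_bottom U_bottom cSuc L_gen_elem[OF gen] U_gen_elem[OF gen])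
  have "(\<Union>x\<in>range c. L x \<alpha>) = (\<Union>n. down D le (\<phi> n ` X \<alpha>))"
  proof (intro equalityI subsetI)
    fix z assume "z \<in> (\<Union>x\<in>range c. L x \<alpha>)"
    then obtain n where "z \<in> L (c n) \<alpha>" by blast
    then show "z \<in> (\<Union>n. down D le (\<phi> n ` X \<alpha>))" using L0 LSuc by (cases n) auto
  next
    fix z assume "z \<in> (\<Union>n. down D le (\<phi> n ` X \<alpha>))"
    then obtain n where "z \<in> L (c (Suc n)) \<alpha>" using LSuc by blast
    then show "z \<in> (\<Union>x\<in>range c. L x \<alpha>)" by blast
  qed
  then show "L (lub (range c)) \<alpha> = scott_closure D le ((\<lambda>i. lub (range (\<lambda>n. \<phi> n i))) ` X \<alpha>)"
    using lub_components(1)[OF S] scott_closure_Union_down_chain[of "X \<alpha>" \<phi>] \<phi>D \<phi>chain by simp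
  have "(\<Inter>x\<in>range c. U x \<alpha>) = (\<Inter>n. up D le (\<phi> n ` Y \<alpha>))"
  proof (intro equalityI subsetI)
    fix z assume "z \<in> (\<Inter>x\<in>range c. U x \<alpha>)"
    then have "z \<in> U (c (Suc n)) \<alpha>" for n by blast
    then show "z \<in> (\<Inter>n. up D le (\<phi> n ` Y \<alpha>))" using USuc by blast
  next
    fix z assume z: "z \<in> (\<Inter>n. up D le (\<phi> n ` Y \<alpha>))"
    then have "z \<in> D" using up_subset by blast
    then have "z \<in> U (c n) \<alpha>" for n using z U0 USuc by (cases n) auto
    then show "z \<in> (\<Inter>x\<in>range c. U x \<alpha>)" by blast
  qed
  then show "U (lub (range c)) \<alpha> = (\<Inter>n. up D le (\<phi> n ` Y \<alpha>))"
    using lub_components(2)[OF S] by simp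
qed

section \<open>Finite approximations\<close>

definition lift :: "('d \<Rightarrow> 'd) \<Rightarrow> 'd \<Rightarrow> 'd" where
  "lift g x = gen_elem (\<lambda>\<alpha>. g ` L x \<alpha>) (\<lambda>\<alpha>. g ` U x \<alpha>)"

lemma generators_image:
  assumes g: "finite_deflation g" and x: "x \<in> D"
  shows "generators (\<lambda>\<alpha>. g ` L x \<alpha>) (\<lambda>\<alpha>. g ` U x \<alpha>)"
  unfolding generators_def
proof (intro allI conjI ballI)
  fix \<alpha>
  have "g ` L x \<alpha> \<subseteq> g ` D" "g ` U x \<alpha> \<subseteq> g ` D"
    using L_subset[OF x, of \<alpha>] U_subset[OF x, of \<alpha>] by auto
  then show "finite (g ` L x \<alpha>)" "finite (g ` U x \<alpha>)"
    using finite_deflationD(1)[OF g] finite_subset by auto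
  show "g ` L x \<alpha> \<subseteq> D" "g ` U x \<alpha> \<subseteq> D"
    using finite_deflationD(3)[OF g] L_subset[OF x, of \<alpha>] U_subset[OF x, of \<alpha>] by auto
  fix a assume "a \<in> g ` L x \<alpha>"
  then obtain l where l: "l \<in> L x \<alpha>" "a = g l" by blast
  obtain l' where l': "l' \<in> L x \<alpha> \<inter> U x \<alpha>" "le l l'" using L_below_L_Int_U[OF x l(1)] by blast
  have lD: "l \<in> D" "l' \<in> D" using l(1) l'(1) L_subset[OF x] by auto
  have gl'D: "g l' \<in> D" using finite_deflationD(3)[OF g lD(2)] .
  have "g l' \<in> down D le (g ` L x \<alpha>) \<inter> up D le (g ` U x \<alpha>)"
    using l'(1) gl'D po_refl[OF gl'D] by (blast intro: downI upI)
  moreover have "le a (g l')" using finite_deflationD(6)[OF g lD l'(2)] l(2) by simp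
  ultimately show "\<exists>c\<in>down D le (g ` L x \<alpha>) \<inter> up D le (g ` U x \<alpha>). le a c" by blast
qed

lemma lift_in_D: "finite_deflation g \<Longrightarrow> x \<in> D \<Longrightarrow> lift g x \<in> D"
  unfolding lift_def by (rule gen_elem_in_D[OF generators_image])

lemma L_lift: "finite_deflation g \<Longrightarrow> x \<in> D \<Longrightarrow> L (lift g x) \<alpha> = down D le (g ` L x \<alpha>)"
  unfolding lift_def by (simp add: L_gen_elem[OF generators_image])

lemma U_lift: "finite_deflation g \<Longrightarrow> x \<in> D \<Longrightarrow> U (lift g x) \<alpha> = up D le (g ` U x \<alpha>)"
  unfolding lift_def by (simp add: U_gen_elem[OF generators_image])

lemma lift_le:
  assumes g: "finite_deflation g" "finite_deflation g'" and xy: "x \<in> D" "y \<in> D"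
    and L: "\<And>\<alpha> x'. x' \<in> L x \<alpha> \<Longrightarrow> \<exists>y'\<in>L y \<alpha>. le (g x') (g' y')"
    and U: "\<And>\<alpha> y'. y' \<in> U y \<alpha> \<Longrightarrow> \<exists>x'\<in>U x \<alpha>. le (g x') (g' y')"
  shows "le (lift g x) (lift g' y)"
  unfolding lift_def
proof (rule gen_elem_le[OF generators_image[OF g(1) xy(1)] generators_image[OF g(2) xy(2)]])
  fix \<alpha> a assume "a \<in> g ` L x \<alpha>"
  then obtain x' where "x' \<in> L x \<alpha>" "a = g x'" by blast
  then show "\<exists>a'\<in>g' ` L y \<alpha>. le a a'" using L by blast
next
  fix \<alpha> b' assume "b' \<in> g' ` U y \<alpha>"
  then obtain y' where "y' \<in> U y \<alpha>" "b' = g' y'" by blast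
  then show "\<exists>b\<in>g ` U x \<alpha>. le b b'" using U by blast
qed

lemma finite_range_lift:
  assumes g: "finite_deflation g"
  shows "finite (lift g ` D)"
proof -
  let ?P = "{P :: 'act \<Rightarrow> _. \<forall>\<alpha>. P \<alpha> \<in> Pow (g ` D) \<times> Pow (g ` D)}"
  have "finite ?P"
    using finite_set_of_finite_funs[of "UNIV :: 'act set" "Pow (g ` D) \<times> Pow (g ` D)" undefined]
      finite_deflationD(1)[OF g] by simp
  moreover have "lift g ` D \<subseteq> (\<lambda>P. gen_elem (\<lambda>\<alpha>. fst (P \<alpha>)) (\<lambda>\<alpha>. snd (P \<alpha>))) ` ?P"
  proof (rule image_subsetI)
    fix x assume x: "x \<in> D"
    have "(\<lambda>\<alpha>. (g ` L x \<alpha>, g ` U x \<alpha>)) \<in> ?P" using L_subset[OF x] U_subset[OF x] by blast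
    then show "lift g x \<in> (\<lambda>P. gen_elem (\<lambda>\<alpha>. fst (P \<alpha>)) (\<lambda>\<alpha>. snd (P \<alpha>))) ` ?P"
      unfolding lift_def by (rule rev_image_eqI) simp
  qed
  ultimately show ?thesis by (rule finite_surj)
qed

lemma lift_below:
  assumes g: "finite_deflation g" and x: "x \<in> D"
  shows "le (lift g x) x"
proof (rule leI[OF lift_in_D[OF g x] x])
  fix \<alpha>
  show "L (lift g x) \<alpha> \<subseteq> L x \<alpha>"
  proof
    fix z assume "z \<in> L (lift g x) \<alpha>"
    then obtain l where z: "z \<in> D" "l \<in> L x \<alpha>" "le z (g l)" using L_lift[OF g x] by (auto elim: downE)
    have lD: "l \<in> D" using z(2) L_subset[OF x] by blast
    show "z \<in> L x \<alpha>"
      using L_down[OF x z(2) z(1)]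
        po_trans[OF z(1) finite_deflationD(3)[OF g lD] lD z(3) finite_deflationD(4)[OF g lD]] .
  qed
  show "U x \<alpha> \<subseteq> U (lift g x) \<alpha>"
    unfolding U_lift[OF g x] using U_subset[OF x] finite_deflationD(4)[OF g] by (blast intro: upI)
qed

lemma lift_idem:
  assumes g: "finite_deflation g" and x: "x \<in> D"
  shows "lift g (lift g x) = lift g x"
proof (rule po_antisym[OF lift_in_D[OF g lift_in_D[OF g x]] lift_in_D[OF g x]])
  show "le (lift g (lift g x)) (lift g x)" by (rule lift_below[OF g lift_in_D[OF g x]])
  have gD: "g y \<in> D" if "y \<in> D" for y using finite_deflationD(3)[OF g that] .
  show "le (lift g x) (lift g (lift g x))"
  proof (rule lift_le[OF g g x lift_in_D[OF g x]])
    fix \<alpha> l assume l: "l \<in> L x \<alpha>"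
    then have lD: "l \<in> D" using L_subset[OF x] by blast
    have "g l \<in> L (lift g x) \<alpha>" unfolding L_lift[OF g x] using l gD[OF lD] po_refl by (blast intro: downI)
    then show "\<exists>y'\<in>L (lift g x) \<alpha>. le (g l) (g y')"
      using finite_deflationD(5)[OF g lD] po_refl[OF gD[OF lD]] by (intro bexI[of _ "g l"]) simp_all
  next
    fix \<alpha> w assume "w \<in> U (lift g x) \<alpha>"
    then obtain u where w: "w \<in> D" "u \<in> U x \<alpha>" "le (g u) w" using U_lift[OF g x] by (auto elim: upE)
    have uD: "u \<in> D" using w(2) U_subset[OF x] by blast
    have "le (g (g u)) (g w)" using finite_deflationD(6)[OF g gD[OF uD] w(1) w(3)] .
    then show "\<exists>x'\<in>U x \<alpha>. le (g x') (g w)" using w(2) finite_deflationD(5)[OF g uD] by auto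
  qed
qed

lemma lift_finite_deflation:
  assumes g: "finite_deflation g"
  shows "finite_deflation (lift g)"
proof -
  have mono: "le (lift g x) (lift g y)" if "x \<in> D" "y \<in> D" "le x y" for x y
    by (rule lift_le[OF g g that(1,2)])
      (use leD[OF that(3) that(1,2)] po_refl finite_deflationD(3)[OF g] L_subset U_subset that(1,2)
        in blast)+
  have compact: "lift g x \<in> K" if x: "x \<in> D" for x
    unfolding lift_def
    by (rule gen_elem_compact[OF generators_image[OF g x]])
      (use finite_deflationD(2)[OF g] L_subset[OF x] U_subset[OF x] in blast)+
  show ?thesis
    unfolding finite_deflation_def
    using finite_range_lift[OF g] mono lift_below[OF g] lift_idem[OF g] compact by blast
qed

primrec approx :: "nat \<Rightarrow> 'd \<Rightarrow> 'd" where
  "approx 0 = (\<lambda>x. bottom)"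
| "approx (Suc n) = lift (approx n)"

lemma finite_deflation_approx: "finite_deflation (approx n)"
proof (induction n)
  case 0
  have "(\<lambda>x. bottom) ` D \<subseteq> {bottom}" by blast
  then have "finite ((\<lambda>x. bottom) ` D)" by (rule finite_subset) simp
  then show ?case
    unfolding finite_deflation_def using bottom_compact bottom_le bottom_in_D po_refl by simp
next
  case (Suc n)
  then show ?case using lift_finite_deflation by simp
qed

lemma approx_in_D: "x \<in> D \<Longrightarrow> approx n x \<in> D"
  using finite_deflationD(3)[OF finite_deflation_approx] .

lemma approx_le_Suc: "x \<in> D \<Longrightarrow> le (approx n x) (approx (Suc n) x)"
proof (induction n arbitrary: x)
  case 0
  then show ?case using bottom_le[OF approx_in_D[of x "Suc 0"]] by simp
next
  case (Suc n)
  have "le (lift (approx n) x) (lift (approx (Suc n)) x)"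
    by (rule lift_le[OF finite_deflation_approx finite_deflation_approx Suc.prems Suc.prems])
      (use Suc.IH L_subset[OF Suc.prems] U_subset[OF Suc.prems] in \<open>blast+\<close>)
  then show ?case by simp
qed

lemma approx_continuous: "scott_continuous D le (approx n)"
  using finite_deflation_continuous[OF finite_deflation_approx] .

lemma approx_below: "x \<in> D \<Longrightarrow> le (approx n x) x"
  using finite_deflationD(4)[OF finite_deflation_approx] .

lemma L_approx_Suc: "x \<in> D \<Longrightarrow> L (approx (Suc n) x) \<alpha> = down D le (approx n ` L x \<alpha>)"
  using L_lift[OF finite_deflation_approx] by simp

lemma U_approx_Suc: "x \<in> D \<Longrightarrow> U (approx (Suc n) x) \<alpha> = up D le (approx n ` U x \<alpha>)"
  using U_lift[OF finite_deflation_approx] by simp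

definition approx_lub :: "'d \<Rightarrow> 'd" where
  "approx_lub x = lub (range (\<lambda>n. approx n x))"

lemma is_lub_approx_lub: "x \<in> D \<Longrightarrow> is_lub D le (range (\<lambda>n. approx n x)) (approx_lub x)"
  unfolding approx_lub_def using chain_lub[of "\<lambda>n. approx n x"] approx_in_D approx_le_Suc by blast

lemma approx_lub_in_D: "x \<in> D \<Longrightarrow> approx_lub x \<in> D"
  using is_lub_in[OF is_lub_approx_lub] .

lemma approx_lub_continuous: "scott_continuous D le approx_lub"
  unfolding approx_lub_def[abs_def]
  using scott_continuous_chain_lub[of approx, OF approx_continuous approx_le_Suc] .

lemma approx_gen_elem: "approx (Suc n) x = gen_elem (\<lambda>\<alpha>. approx n ` L x \<alpha>) (\<lambda>\<alpha>. approx n ` U x \<alpha>)"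
  by (simp add: lift_def)

lemma components_approx_lub:
  assumes x: "x \<in> D"
  shows "L (approx_lub x) \<alpha> = scott_closure D le (approx_lub ` L x \<alpha>)"
    and "U (approx_lub x) \<alpha> = up D le (approx_lub ` U x \<alpha>)"
proof -
  have approx: "approx n i \<in> D" "le (approx n i) (approx (Suc n) i)" if "i \<in> L x \<alpha>" for n i
    using that L_subset[OF x] approx_in_D approx_le_Suc by blast+
  note chain = lub_gen_elem_chain[where c = "\<lambda>n. approx n x" and \<phi> = approx and X = "L x" and Y = "U x",
      OF approx _ generators_image[OF finite_deflation_approx x] approx_gen_elem approx_le_Suc[OF x], simplified]
  show "L (approx_lub x) \<alpha> = scott_closure D le (approx_lub ` L x \<alpha>)"
    unfolding approx_lub_def using chain(1) .
  have "U (approx_lub x) \<alpha> = (\<Inter>n. up D le (approx n ` U x \<alpha>))"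
    unfolding approx_lub_def using chain(2) .
  also have "\<dots> = up D le (approx_lub ` U x \<alpha>)"
    unfolding approx_lub_def
    by (rule Inter_up_chain_lawson_closed[of _ approx, OF lawson_closed_U[OF x] approx_continuous approx_le_Suc])
  finally show "U (approx_lub x) \<alpha> = up D le (approx_lub ` U x \<alpha>)" .
qed

lemma Phi_approx_lub: "x \<in> D \<Longrightarrow> Phi D le \<iota> approx_lub x = approx_lub x"
proof -
  assume x: "x \<in> D"
  have "(\<lambda>\<alpha>. mixed_map D le approx_lub (\<iota> x \<alpha>)) = \<iota> (approx_lub x)"
    using components_approx_lub[OF x] unfolding mixed_map_def L_def U_def by (auto simp: prod_eq_iff)
  then show ?thesis unfolding Phi_def using elem_iota[OF approx_lub_in_D[OF x]] unfolding elem_def by simp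
qed

text \<open>Initiality of the solution: the continuous fixed point approx_lub of the functor lies above
  the identity.\<close>
theorem approx_lub_eq: "x \<in> D \<Longrightarrow> approx_lub x = x"
proof -
  assume x: "x \<in> D"
  have "le x (approx_lub x)" using minimal_invariant[OF approx_lub_continuous Phi_approx_lub x] .
  moreover have "le (approx_lub x) x" using is_lub_least[OF is_lub_approx_lub[OF x] x] approx_below[OF x] by blast
  ultimately show ?thesis using po_antisym[OF x approx_lub_in_D[OF x]] by simp
qed

theorem le_coinduct:
  assumes "Q \<subseteq> D \<times> D" "(x, y) \<in> Q"
    and L: "\<And>x y \<alpha> x'. (x, y) \<in> Q \<Longrightarrow> x' \<in> L x \<alpha> \<Longrightarrow> \<exists>y'\<in>L y \<alpha>. (x', y') \<in> Q"
    and U: "\<And>x y \<alpha> y'. (x, y) \<in> Q \<Longrightarrow> y' \<in> U y \<alpha> \<Longrightarrow> \<exists>x'\<in>U x \<alpha>. (x', y') \<in> Q"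
  shows "le x y"
proof -
  have approx_le: "le (approx n x) (approx n y)" if "(x, y) \<in> Q" for n x y
    using that
  proof (induction n arbitrary: x y)
    case 0
    then show ?case using po_refl[OF bottom_in_D] by simp
  next
    case (Suc n)
    have xy: "x \<in> D" "y \<in> D" using Suc.prems assms(1) by auto
    have "le (lift (approx n) x) (lift (approx n) y)"
      by (rule lift_le[OF finite_deflation_approx finite_deflation_approx xy])
        (use Suc.IH Suc.prems L U in blast)+
    then show ?case by simp
  qed
  have xy: "x \<in> D" "y \<in> D" using assms(1,2) by auto
  have "le (approx n x) y" for n
    using po_trans[OF approx_in_D[OF xy(1)] approx_in_D[OF xy(2)] xy(2) approx_le[OF assms(2)]
        approx_below[OF xy(2)]] .
  then have "le (approx_lub x) y" using is_lub_least[OF is_lub_approx_lub[OF xy(1)] xy(2)] by blast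
  then show ?thesis using approx_lub_eq[OF xy(1)] by simp
qed

section \<open>Refinement and the order of D\<close>

lemma dsys_eq: "dsys D \<iota> = (D, {(d,\<alpha>,d'). d \<in> D \<and> d' \<in> L d \<alpha>}, {(d,\<alpha>,d'). d \<in> D \<and> d' \<in> U d \<alpha>})"
  unfolding dsys_def L_def U_def ..

lemma refinement_dsys_le:
  assumes "refinement_between (dsys D \<iota>) (dsys D \<iota>) Q" "(x, y) \<in> Q"
  shows "le x y"
proof -
  note Q = refinement_betweenD[OF assms(1)[unfolded dsys_eq]]
  show ?thesis
  proof (rule le_coinduct[OF _ assms(2)])
    show "Q \<subseteq> D \<times> D" using Q(1,2) by auto
  next
    fix x y \<alpha> x' assume "(x, y) \<in> Q" "x' \<in> L x \<alpha>"
    then show "\<exists>y'\<in>L y \<alpha>. (x', y') \<in> Q" using Q(1)[of x y] Q(3)[of x y \<alpha> x'] by auto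
  next
    fix x y \<alpha> y' assume "(x, y) \<in> Q" "y' \<in> U y \<alpha>"
    then show "\<exists>x'\<in>U x \<alpha>. (x', y') \<in> Q" using Q(2)[of x y] Q(4)[of x y \<alpha> y'] by auto
  qed
qed

lemma refines_le:
  assumes "refines (dsys D \<iota>) x M s" "refines M s (dsys D \<iota>) y"
  shows "le x y"
proof -
  obtain Q1 Q2 where Q: "refinement_between (dsys D \<iota>) M Q1" "(x, s) \<in> Q1"
    "refinement_between M (dsys D \<iota>) Q2" "(s, y) \<in> Q2"
    using assms unfolding refines_iff by blast
  have "(x, y) \<in> Q1 O Q2" using Q(2,4) by (rule relcompI)
  then show ?thesis by (rule refinement_dsys_le[OF refinement_between_relcomp[OF Q(1,3)]])
qed

lemma bracket_eqI:
  assumes "d \<in> D" "ref_equiv (dsys D \<iota>) d M i"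
  shows "bracket D \<iota> M i = d"
  unfolding bracket_def
proof (rule the_equality)
  fix d' assume d': "d' \<in> D \<and> ref_equiv (dsys D \<iota>) d' M i"
  then have "le d' d" "le d d'"
    using assms(2) refines_le[of d' M i d] refines_le[of d M i d'] unfolding ref_equiv_def by blast+
  then show "d' = d" using po_antisym assms(1) d' by blast
qed (use assms in blast)

lemma generated_by_same_maximal:
  assumes E: "E \<subseteq> D" "\<And>e \<alpha>. e \<in> E \<Longrightarrow> \<exists>N\<subseteq>E. L e \<alpha> = down D le N \<and> U e \<alpha> = up D le N"
    and e: "e \<in> E" and y: "y \<in> D" "le e y"
  shows "y = e"
proof -
  define Q where "Q = {(y, z). y \<in> D \<and> z \<in> D \<and> (\<exists>e\<in>E. \<exists>w\<in>D. le e z \<and> le y w \<and> le e w)}"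
  have ED: "e \<in> D" using e E(1) by blast
  have "le y e"
  proof (rule le_coinduct[of Q])
    show "Q \<subseteq> D \<times> D" unfolding Q_def by blast
    show "(y, e) \<in> Q" unfolding Q_def using y e ED po_refl by blast
  next
    fix y z \<alpha> y' assume "(y, z) \<in> Q" and y': "y' \<in> L y \<alpha>"
    then obtain e w where yz: "y \<in> D" "z \<in> D" "e \<in> E" "w \<in> D" "le e z" "le y w" "le e w"
      unfolding Q_def by blast
    obtain N where N: "N \<subseteq> E" "L e \<alpha> = down D le N" "U e \<alpha> = up D le N" using E(2)[OF yz(3), of \<alpha>] by blast
    have eD: "e \<in> D" using yz(3) E(1) by blast
    have "y' \<in> L w \<alpha>" using y' leD[OF yz(6) yz(1,4)] by blast
    then obtain w' where w': "w' \<in> L w \<alpha> \<inter> U w \<alpha>" "le y' w'" using L_below_L_Int_U[OF yz(4)] by blast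
    then have "w' \<in> up D le N" using leD[OF yz(7) eD yz(4)] N(3) by blast
    then obtain n where n: "n \<in> N" "le n w'" by (auto elim: upE)
    have nD: "n \<in> D" using n(1) N(1) E(1) by blast
    have "n \<in> L z \<alpha>" using leD[OF yz(5) eD yz(2)] N(2) n(1) nD po_refl by (blast intro: downI)
    moreover have "(y', n) \<in> Q"
      unfolding Q_def using y' L_subset[OF yz(1)] nD n N(1) w' L_subset[OF yz(4)] po_refl by blast
    ultimately show "\<exists>y''\<in>L z \<alpha>. (y', y'') \<in> Q" by blast
  next
    fix y z \<alpha> z' assume "(y, z) \<in> Q" and z': "z' \<in> U z \<alpha>"
    then obtain e w where yz: "y \<in> D" "z \<in> D" "e \<in> E" "w \<in> D" "le e z" "le y w" "le e w"
      unfolding Q_def by blast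
    obtain N where N: "N \<subseteq> E" "L e \<alpha> = down D le N" "U e \<alpha> = up D le N" using E(2)[OF yz(3), of \<alpha>] by blast
    have eD: "e \<in> D" using yz(3) E(1) by blast
    have "z' \<in> up D le N" using z' leD[OF yz(5) eD yz(2)] N(3) by blast
    then obtain n where n: "n \<in> N" "le n z'" by (auto elim: upE)
    have nD: "n \<in> D" using n(1) N(1) E(1) by blast
    have "n \<in> L w \<alpha>" using leD[OF yz(7) eD yz(4)] N(2) n(1) nD po_refl by (blast intro: downI)
    then obtain w'' where w'': "w'' \<in> L w \<alpha> \<inter> U w \<alpha>" "le n w''" using L_below_L_Int_U[OF yz(4)] by blast
    have w''D: "w'' \<in> D" using w''(1) L_subset[OF yz(4)] by blast
    have "w'' \<in> U y \<alpha>" using w''(1) leD[OF yz(6) yz(1,4)] by blast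
    moreover have "(w'', z') \<in> Q"
      unfolding Q_def using w''D z' U_subset[OF yz(2)] n N(1) w'' po_refl[OF w''D] by blast
    ultimately show "\<exists>x'\<in>U y \<alpha>. (x', z') \<in> Q" by blast
  qed
  then show ?thesis using po_antisym[OF y(1) ED] y(2) by blast
qed

section \<open>Labelled transition systems in D\<close>

primrec lts_approx :: "('s \<times> 'act \<times> 's) set \<Rightarrow> nat \<Rightarrow> 's \<Rightarrow> 'd" where
  "lts_approx R 0 s = bottom"
| "lts_approx R (Suc n) s =
     gen_elem (\<lambda>\<alpha>. lts_approx R n ` succs R s \<alpha>) (\<lambda>\<alpha>. lts_approx R n ` succs R s \<alpha>)"

definition lts_elem :: "('s \<times> 'act \<times> 's) set \<Rightarrow> 's \<Rightarrow> 'd" where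
  "lts_elem R s = lub (range (\<lambda>n. lts_approx R n s))"

context
  fixes R :: "('s \<times> 'act \<times> 's) set"
  assumes finite_succs: "\<And>s \<alpha>. finite (succs R s \<alpha>)"
begin

lemma lts_approx_in_D: "lts_approx R n s \<in> D"
  and generators_lts_approx: "generators (\<lambda>\<alpha>. lts_approx R n ` succs R s \<alpha>) (\<lambda>\<alpha>. lts_approx R n ` succs R s \<alpha>)"
proof -
  have "(\<forall>s. lts_approx R n s \<in> D) \<and>
    (\<forall>s. generators (\<lambda>\<alpha>. lts_approx R n ` succs R s \<alpha>) (\<lambda>\<alpha>. lts_approx R n ` succs R s \<alpha>))"
  proof (induction n)
    case 0
    show ?case using bottom_in_D finite_succs by (auto intro: generators_same)
  next
    case (Suc n)
    then have "\<forall>s. lts_approx R (Suc n) s \<in> D" using gen_elem_in_D by simp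
    then show ?case using finite_succs by (auto intro: generators_same simp del: lts_approx.simps)
  qed
  then show "lts_approx R n s \<in> D"
    "generators (\<lambda>\<alpha>. lts_approx R n ` succs R s \<alpha>) (\<lambda>\<alpha>. lts_approx R n ` succs R s \<alpha>)"
    by blast+
qed

lemma lts_approx_le_Suc: "le (lts_approx R n s) (lts_approx R (Suc n) s)"
proof (induction n arbitrary: s)
  case 0
  show ?case using bottom_le[OF lts_approx_in_D[of "Suc 0" s]] by (simp only: lts_approx.simps(1))
next
  case (Suc n)
  have "le (gen_elem (\<lambda>\<alpha>. lts_approx R n ` succs R s \<alpha>) (\<lambda>\<alpha>. lts_approx R n ` succs R s \<alpha>))
    (gen_elem (\<lambda>\<alpha>. lts_approx R (Suc n) ` succs R s \<alpha>) (\<lambda>\<alpha>. lts_approx R (Suc n) ` succs R s \<alpha>))"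
    by (rule gen_elem_le[OF generators_lts_approx generators_lts_approx]) (use Suc.IH in blast)+
  then show ?case by simp
qed

lemma is_lub_lts_elem: "is_lub D le (range (\<lambda>n. lts_approx R n s)) (lts_elem R s)"
  unfolding lts_elem_def using chain_lub[of "\<lambda>n. lts_approx R n s"] lts_approx_in_D lts_approx_le_Suc by blast

lemma lts_elem_in_D: "lts_elem R s \<in> D"
  using is_lub_in[OF is_lub_lts_elem] .

lemma L_lts_elem: "L (lts_elem R s) \<alpha> = down D le (lts_elem R ` succs R s \<alpha>)"
proof -
  have "L (lts_elem R s) \<alpha> = scott_closure D le (lts_elem R ` succs R s \<alpha>)"
    unfolding lts_elem_def
    by (rule lub_gen_elem_chain(1)[OF lts_approx_in_D lts_approx_le_Suc lts_approx.simps(1)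
          generators_lts_approx lts_approx.simps(2) lts_approx_le_Suc])
  also have "\<dots> = down D le (lts_elem R ` succs R s \<alpha>)"
    using finite_succs lts_elem_in_D by (intro scott_closure_finite) auto
  finally show ?thesis .
qed

lemma U_lts_elem: "U (lts_elem R s) \<alpha> = up D le (lts_elem R ` succs R s \<alpha>)"
proof -
  have "U (lts_elem R s) \<alpha> = (\<Inter>n. up D le (lts_approx R n ` succs R s \<alpha>))"
    unfolding lts_elem_def
    by (rule lub_gen_elem_chain(2)[OF lts_approx_in_D lts_approx_le_Suc lts_approx.simps(1)
          generators_lts_approx lts_approx.simps(2) lts_approx_le_Suc])
  also have "\<dots> = up D le (lts_elem R ` succs R s \<alpha>)"
    unfolding lts_elem_def by (rule Inter_up_chain_finite[of _ "lts_approx R", OF finite_succs lts_approx_in_D lts_approx_le_Suc])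
  finally show ?thesis .
qed

lemma lts_elem_maximal: "y \<in> D \<Longrightarrow> le (lts_elem R s) y \<Longrightarrow> y = lts_elem R s"
proof (rule generated_by_same_maximal[of "range (lts_elem R)"])
  fix e \<alpha> assume "e \<in> range (lts_elem R)"
  then obtain s' where "e = lts_elem R s'" by blast
  then show "\<exists>N\<subseteq>range (lts_elem R). L e \<alpha> = down D le N \<and> U e \<alpha> = up D le N"
    using L_lts_elem U_lts_elem by (intro exI[of _ "lts_elem R ` succs R s' \<alpha>"]) auto
qed (use lts_elem_in_D in auto)

lemma lts_wfD: "lts_wf \<Sigma> R \<Longrightarrow> (s, \<alpha>, s') \<in> R \<Longrightarrow> s \<in> \<Sigma> \<and> s' \<in> \<Sigma>"
  unfolding lts_wf_def by auto

lemma refinement_dsys_lts: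
  assumes wf: "lts_wf \<Sigma> R"
  shows "refinement_between (dsys D \<iota>) (lts \<Sigma> R) {(x, s). s \<in> \<Sigma> \<and> x \<in> D \<and> le x (lts_elem R s)}"
    (is "refinement_between _ _ ?Q1")
  unfolding dsys_eq lts_def
proof (rule refinement_betweenI)
  fix x s \<alpha> x' assume "(x, s) \<in> ?Q1" "(x, \<alpha>, x') \<in> {(d, \<alpha>, d'). d \<in> D \<and> d' \<in> L d \<alpha>}"
  then have xs: "s \<in> \<Sigma>" "x \<in> D" "le x (lts_elem R s)" and x': "x' \<in> L x \<alpha>" by auto
  have "x' \<in> L (lts_elem R s) \<alpha>" using x' leD[OF xs(3) xs(2) lts_elem_in_D] by blast
  then obtain s' where s': "x' \<in> D" "s' \<in> succs R s \<alpha>" "le x' (lts_elem R s')"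
    unfolding L_lts_elem by (auto elim: downE)
  then have "(s, \<alpha>, s') \<in> R" "s' \<in> \<Sigma>" using lts_wfD[OF wf] unfolding succs_def by auto
  then show "\<exists>s'. (s, \<alpha>, s') \<in> R \<and> (x', s') \<in> ?Q1" using s' by blast
next
  fix x s \<alpha> s' assume "(x, s) \<in> ?Q1" and s': "(s, \<alpha>, s') \<in> R"
  then have xs: "s \<in> \<Sigma>" "x \<in> D" "le x (lts_elem R s)" by auto
  have "lts_elem R s' \<in> U (lts_elem R s) \<alpha>"
    unfolding U_lts_elem using s' lts_elem_in_D po_refl unfolding succs_def by (blast intro: upI)
  then have "lts_elem R s' \<in> U x \<alpha>" using leD[OF xs(3) xs(2) lts_elem_in_D] by blast
  moreover have "s' \<in> \<Sigma>" using lts_wfD[OF wf s'] by blast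
  ultimately show "\<exists>x'. (x, \<alpha>, x') \<in> {(d, \<alpha>, d'). d \<in> D \<and> d' \<in> U d \<alpha>} \<and> (x', s') \<in> ?Q1"
    using xs(2) lts_elem_in_D po_refl by blast
qed auto

lemma refinement_lts_dsys:
  assumes wf: "lts_wf \<Sigma> R"
  shows "refinement_between (lts \<Sigma> R) (dsys D \<iota>) {(s, x). s \<in> \<Sigma> \<and> x \<in> D \<and> le (lts_elem R s) x}"
    (is "refinement_between _ _ ?Q2")
  unfolding dsys_eq lts_def
proof (rule refinement_betweenI)
  fix s x \<alpha> s' assume "(s, x) \<in> ?Q2" and s': "(s, \<alpha>, s') \<in> R"
  then have xs: "s \<in> \<Sigma>" "x \<in> D" "le (lts_elem R s) x" by auto
  have "lts_elem R s' \<in> L (lts_elem R s) \<alpha>"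
    unfolding L_lts_elem using s' lts_elem_in_D po_refl unfolding succs_def by (blast intro: downI)
  then have "lts_elem R s' \<in> L x \<alpha>" using leD[OF xs(3) lts_elem_in_D xs(2)] by blast
  moreover have "s' \<in> \<Sigma>" using lts_wfD[OF wf s'] by blast
  ultimately show "\<exists>x'. (x, \<alpha>, x') \<in> {(d, \<alpha>, d'). d \<in> D \<and> d' \<in> L d \<alpha>} \<and> (s', x') \<in> ?Q2"
    using xs(2) lts_elem_in_D po_refl by blast
next
  fix s x \<alpha> x' assume "(s, x) \<in> ?Q2" "(x, \<alpha>, x') \<in> {(d, \<alpha>, d'). d \<in> D \<and> d' \<in> U d \<alpha>}"
  then have xs: "s \<in> \<Sigma>" "x \<in> D" "le (lts_elem R s) x" and x': "x' \<in> U x \<alpha>" by auto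
  have "x' \<in> U (lts_elem R s) \<alpha>" using x' leD[OF xs(3) lts_elem_in_D xs(2)] by blast
  then obtain s' where s': "x' \<in> D" "s' \<in> succs R s \<alpha>" "le (lts_elem R s') x'"
    unfolding U_lts_elem by (auto elim: upE)
  then have "(s, \<alpha>, s') \<in> R" "s' \<in> \<Sigma>" using lts_wfD[OF wf] unfolding succs_def by auto
  then show "\<exists>s'. (s, \<alpha>, s') \<in> R \<and> (s', x') \<in> ?Q2" using s' by blast
qed auto

lemma lts_elem_ref_equiv:
  assumes wf: "lts_wf \<Sigma> R" and l: "l \<in> \<Sigma>"
  shows "ref_equiv (dsys D \<iota>) (lts_elem R l) (lts \<Sigma> R) l"
proof -
  have "(lts_elem R l, l) \<in> {(x, s). s \<in> \<Sigma> \<and> x \<in> D \<and> le x (lts_elem R s)}"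
    "(l, lts_elem R l) \<in> {(s, x). s \<in> \<Sigma> \<and> x \<in> D \<and> le (lts_elem R s) x}"
    using l lts_elem_in_D po_refl by blast+
  then show ?thesis
    unfolding ref_equiv_def refines_iff using refinement_dsys_lts[OF wf] refinement_lts_dsys[OF wf] by blast
qed

lemma bracket_lts: "lts_wf \<Sigma> R \<Longrightarrow> l \<in> \<Sigma> \<Longrightarrow> bracket D \<iota> (lts \<Sigma> R) l = lts_elem R l"
  by (rule bracket_eqI[OF lts_elem_in_D lts_elem_ref_equiv])

end

lemma lts_approx_rename:
  assumes closed: "\<And>s \<alpha>. s \<in> S \<Longrightarrow> succs R s \<alpha> \<subseteq> S"
    and rename: "\<And>s \<alpha>. s \<in> S \<Longrightarrow> succs R' (h s) \<alpha> = h ` succs R s \<alpha>"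
  shows "s \<in> S \<Longrightarrow> lts_approx R' n (h s) = lts_approx R n s"
proof (induction n arbitrary: s)
  case 0
  then show ?case by simp
next
  case (Suc n)
  have "lts_approx R' n ` succs R' (h s) \<alpha> = (\<lambda>s'. lts_approx R' n (h s')) ` succs R s \<alpha>" for \<alpha>
    unfolding rename[OF Suc.prems] image_image ..
  also have "\<dots> \<alpha> = lts_approx R n ` succs R s \<alpha>" for \<alpha>
    using closed[OF Suc.prems] Suc.IH by (intro image_cong) auto
  finally have "lts_approx R' n ` succs R' (h s) \<alpha> = lts_approx R n ` succs R s \<alpha>" for \<alpha> .
  then show ?case by simp
qed

lemma lts_elem_rename:
  assumes "\<And>s \<alpha>. s \<in> S \<Longrightarrow> succs R s \<alpha> \<subseteq> S" "\<And>s \<alpha>. s \<in> S \<Longrightarrow> succs R' (h s) \<alpha> = h ` succs R s \<alpha>"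
    and "s \<in> S"
  shows "lts_elem R' (h s) = lts_elem R s"
  unfolding lts_elem_def using lts_approx_rename[OF assms] by simp

lemma lts_embedding:
  fixes R0 :: "('t \<times> 'act \<times> 't) set"
  assumes inf: "infinite (UNIV :: 's set)" and S: "countable S"
    and R0S: "\<And>a \<alpha> b. (a, \<alpha>, b) \<in> R0 \<Longrightarrow> a \<in> S \<and> b \<in> S"
    and fin: "\<And>a \<alpha>. finite (succs R0 a \<alpha>)" and a: "a \<in> S"
  obtains \<Sigma> :: "'s set" and R l
  where "lts_wf \<Sigma> R" "l \<in> \<Sigma>" "image_finite (lts \<Sigma> R)" "lts_elem R l = lts_elem R0 a"
proof -
  obtain g :: "'t \<Rightarrow> nat" where g: "inj_on g S" using S by (rule countableE)
  obtain f :: "nat \<Rightarrow> 's" where f: "inj f" using infinite_countable_subset[OF inf] by blast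
  define h where "h = f \<circ> g"
  have h: "inj_on h S" unfolding h_def using comp_inj_on[OF g inj_on_subset[OF f subset_UNIV]] .
  define \<Sigma> where "\<Sigma> = h ` S"
  define R where "R = {(h a, \<alpha>, h b) | a \<alpha> b. (a, \<alpha>, b) \<in> R0}"
  have succs_h: "succs R (h a) \<alpha> = h ` succs R0 a \<alpha>" if a: "a \<in> S" for a \<alpha>
  proof
    show "succs R (h a) \<alpha> \<subseteq> h ` succs R0 a \<alpha>"
    proof
      fix s' assume "s' \<in> succs R (h a) \<alpha>"
      then obtain a' b where ab: "h a = h a'" "s' = h b" "(a', \<alpha>, b) \<in> R0"
        unfolding succs_def R_def by blast
      then have "a' = a" using inj_onD[OF h ab(1)] R0S a by auto
      then show "s' \<in> h ` succs R0 a \<alpha>" using ab unfolding succs_def by blast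
    qed
    show "h ` succs R0 a \<alpha> \<subseteq> succs R (h a) \<alpha>" unfolding succs_def R_def by blast
  qed
  have closed: "succs R0 a \<alpha> \<subseteq> S" if "a \<in> S" for a \<alpha> using R0S unfolding succs_def by blast
  have "finite (succs R s \<alpha>)" for s \<alpha>
  proof (cases "s \<in> \<Sigma>")
    case True
    then obtain a where "a \<in> S" "s = h a" unfolding \<Sigma>_def by blast
    then show ?thesis using succs_h fin by simp
  next
    case False
    then have "succs R s \<alpha> = {}" unfolding succs_def R_def \<Sigma>_def using R0S by blast
    then show ?thesis by simp
  qed
  moreover have "lts_wf \<Sigma> R" unfolding lts_wf_def \<Sigma>_def R_def using R0S by blast
  moreover have "h a \<in> \<Sigma>" unfolding \<Sigma>_def using a by blast
  moreover have "lts_elem R (h a) = lts_elem R0 a" using lts_elem_rename[OF closed succs_h a] .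
  ultimately show ?thesis using that unfolding image_finite_lts_iff by blast
qed

section \<open>Density of the labelled transition systems\<close>

definition approx_states :: "(nat \<times> 'd) set" where
  "approx_states = {(n, approx n x) | n x. x \<in> D}"

definition approx_lts :: "((nat \<times> 'd) \<times> 'act \<times> (nat \<times> 'd)) set" where
  "approx_lts = {((Suc n, c), \<alpha>, (n, c')) | n c \<alpha> c'.
     c \<in> approx (Suc n) ` D \<and> c' \<in> approx n ` D \<inter> L c \<alpha> \<inter> U c \<alpha>}"

lemma countable_approx_states: "countable approx_states"
proof -
  have "approx_states = (\<Union>n. Pair n ` approx n ` D)" unfolding approx_states_def by blast
  moreover have "finite (Pair n ` approx n ` D)" for n
    using finite_deflationD(1)[OF finite_deflation_approx] by blast
  ultimately show ?thesis by (simp add: countable_finite)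
qed

lemma approx_lts_states: "(a, \<alpha>, b) \<in> approx_lts \<Longrightarrow> a \<in> approx_states \<and> b \<in> approx_states"
  unfolding approx_lts_def approx_states_def by blast

lemma succs_approx_lts:
  "c \<in> approx (Suc n) ` D \<Longrightarrow> succs approx_lts (Suc n, c) \<alpha> = Pair n ` (approx n ` D \<inter> L c \<alpha> \<inter> U c \<alpha>)"
  unfolding succs_def approx_lts_def by blast

lemma finite_succs_approx_lts: "finite (succs approx_lts a \<alpha>)"
proof -
  have "succs approx_lts a \<alpha> \<subseteq> Pair (fst a - 1) ` approx (fst a - 1) ` D"
    unfolding succs_def approx_lts_def by force
  moreover have "finite (Pair (fst a - 1) ` approx (fst a - 1) ` D)"
    using finite_deflationD(1)[OF finite_deflation_approx] by blast
  ultimately show ?thesis by (rule finite_subset)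
qed

lemma approx_le_lts_elem: "x \<in> D \<Longrightarrow> le (approx n x) (lts_elem approx_lts (n, approx n x))"
proof (induction n arbitrary: x)
  case 0
  then show ?case using bottom_le[OF lts_elem_in_D[OF finite_succs_approx_lts]] by simp
next
  case (Suc n)
  let ?c = "approx (Suc n) x" and ?d = "lts_elem approx_lts (Suc n, approx (Suc n) x)"
  have x: "x \<in> D" by fact
  have cD: "?c \<in> D" and dD: "?d \<in> D" using approx_in_D[OF x] lts_elem_in_D[OF finite_succs_approx_lts] .
  have succs: "succs approx_lts (Suc n, ?c) \<alpha> = Pair n ` (approx n ` D \<inter> L ?c \<alpha> \<inter> U ?c \<alpha>)" for \<alpha>
    using succs_approx_lts x by blast
  have IH: "le c' (lts_elem approx_lts (n, c'))" if "c' \<in> approx n ` D" for c'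
    using that Suc.IH by blast
  show ?case
  proof (rule leI[OF cD dD])
    fix \<alpha>
    show "L ?c \<alpha> \<subseteq> L ?d \<alpha>"
    proof
      fix y assume "y \<in> L ?c \<alpha>"
      then obtain l where y: "y \<in> D" "l \<in> L x \<alpha>" "le y (approx n l)"
        unfolding L_approx_Suc[OF x] by (auto elim: downE)
      obtain l' where l': "l' \<in> L x \<alpha> \<inter> U x \<alpha>" "le l l'" using L_below_L_Int_U[OF x y(2)] by blast
      have lD: "l \<in> D" "l' \<in> D" using y(2) l'(1) L_subset[OF x] by auto
      let ?c' = "approx n l'"
      have c'D: "?c' \<in> D" using approx_in_D[OF lD(2)] .
      have "?c' \<in> L ?c \<alpha>" "?c' \<in> U ?c \<alpha>"
        unfolding L_approx_Suc[OF x] U_approx_Suc[OF x] using l'(1) c'D po_refl[OF c'D]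
        by (blast intro: downI upI)+
      then have succ: "(n, ?c') \<in> succs approx_lts (Suc n, ?c) \<alpha>" unfolding succs using lD(2) by blast
      have "le y ?c'"
        using po_trans[OF y(1) approx_in_D[OF lD(1)] c'D y(3)]
          finite_deflationD(6)[OF finite_deflation_approx lD l'(2)] by blast
      then have "le y (lts_elem approx_lts (n, ?c'))"
        using po_trans[OF y(1) c'D lts_elem_in_D[OF finite_succs_approx_lts]] IH lD(2) by blast
      then show "y \<in> L ?d \<alpha>"
        unfolding L_lts_elem[OF finite_succs_approx_lts] using y(1) succ by (blast intro: downI)
    qed
    show "U ?d \<alpha> \<subseteq> U ?c \<alpha>"
    proof
      fix z assume "z \<in> U ?d \<alpha>"
      then obtain s' where z: "z \<in> D" "s' \<in> succs approx_lts (Suc n, ?c) \<alpha>" "le (lts_elem approx_lts s') z"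
        unfolding U_lts_elem[OF finite_succs_approx_lts] by (auto elim: upE)
      then obtain c' where c': "c' \<in> approx n ` D" "c' \<in> U ?c \<alpha>" "s' = (n, c')" unfolding succs by blast
      have c'D: "c' \<in> D" using c'(1) approx_in_D by blast
      have "le c' z"
        using po_trans[OF c'D lts_elem_in_D[OF finite_succs_approx_lts] z(1) IH[OF c'(1)]] z(3) c'(3) by blast
      then show "z \<in> U ?c \<alpha>" using U_up[OF cD c'(2) z(1)] by blast
    qed
  qed
qed

theorem lts_dense:
  assumes inf: "infinite (UNIV :: 's set)" and V: "scott_open D le V" "x \<in> V"
  obtains \<Sigma> :: "'s set" and R l
  where "lts_wf \<Sigma> R" "l \<in> \<Sigma>" "image_finite (lts \<Sigma> R)" "bracket D \<iota> (lts \<Sigma> R) l \<in> V"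
proof -
  have VK: "V = up D le (V \<inter> K)" "V \<subseteq> D" using V(1) unfolding scott_open_def by auto
  have x: "x \<in> D" using V(2) VK(2) by blast
  obtain k where k: "k \<in> V \<inter> K" "le k x" using V(2) VK(1) by (auto elim: upE)
  then have "le k (approx_lub x)" using approx_lub_eq[OF x] by simp
  then obtain n where n: "le k (approx n x)"
    using compactD[OF _ chain_directed is_lub_approx_lub[OF x]] k(1) approx_in_D[OF x] approx_le_Suc[OF x] by blast
  have "(n, approx n x) \<in> approx_states" unfolding approx_states_def using x by blast
  then obtain \<Sigma> :: "'s set" and R l where R: "lts_wf \<Sigma> R" "l \<in> \<Sigma>" "image_finite (lts \<Sigma> R)"
    and l: "lts_elem R l = lts_elem approx_lts (n, approx n x)"
    using lts_embedding[OF inf countable_approx_states, of approx_lts] approx_lts_states finite_succs_approx_lts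
    by metis
  have "bracket D \<iota> (lts \<Sigma> R) l = lts_elem approx_lts (n, approx n x)"
    using bracket_lts[OF _ R(1,2)] R(3) l unfolding image_finite_lts_iff by simp
  moreover have "le k (lts_elem approx_lts (n, approx n x))"
    using po_trans[OF _ approx_in_D[OF x] lts_elem_in_D[OF finite_succs_approx_lts] n approx_le_lts_elem[OF x]]
      k(1) compacts_subset by blast
  ultimately have "bracket D \<iota> (lts \<Sigma> R) l \<in> up D le (V \<inter> K)"
    using k(1) lts_elem_in_D[OF finite_succs_approx_lts] by (auto intro: upI)
  then show ?thesis using that[OF R] VK(1) by blast
qed

end

theorem proposition3p14:
  fixes D :: "'d set" and le :: "'d \<Rightarrow> 'd \<Rightarrow> bool"
    and \<iota> :: "'d \<Rightarrow> ('act::finite \<Rightarrow> 'd set \<times> 'd set)"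
  assumes "initial_solution D le \<iota>"
    and "infinite (UNIV :: 's set)"
  defines "LTSs \<equiv> {bracket D \<iota> (lts \<Sigma> R) l | (\<Sigma> :: 's set) R l.
                       lts_wf \<Sigma> R \<and> l \<in> \<Sigma> \<and> image_finite (lts \<Sigma> R)}"
  shows "LTSs \<subseteq> maximals D le \<and>
         (\<forall>U. scott_open D le U \<and> U \<inter> maximals D le \<noteq> {} \<longrightarrow> U \<inter> maximals D le \<inter> LTSs \<noteq> {})"
proof -
  interpret mixed_solution D le \<iota> by unfold_locales (rule assms(1))
  have maximal: "bracket D \<iota> (lts \<Sigma> R) l \<in> maximals D le"
    if "lts_wf \<Sigma> R" "l \<in> \<Sigma>" "image_finite (lts \<Sigma> R)" for \<Sigma> :: "'s set" and R l
  proof -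
    have fin: "\<And>s \<alpha>. finite (succs R s \<alpha>)" using that(3) unfolding image_finite_lts_iff by blast
    show ?thesis
      unfolding bracket_lts[OF fin that(1,2)] maximals_def
      using lts_elem_in_D[OF fin] lts_elem_maximal[OF fin] by blast
  qed
  have "LTSs \<subseteq> maximals D le" unfolding LTSs_def using maximal by blast
  moreover have "V \<inter> maximals D le \<inter> LTSs \<noteq> {}"
    if V: "scott_open D le V" "x \<in> V" for V x
  proof -
    obtain \<Sigma> :: "'s set" and R l where "lts_wf \<Sigma> R" "l \<in> \<Sigma>" "image_finite (lts \<Sigma> R)"
      "bracket D \<iota> (lts \<Sigma> R) l \<in> V"
      using lts_dense[OF assms(2) V] .
    then show ?thesis unfolding LTSs_def using maximal by blast
  qed
  ultimately show ?thesis by blast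
qed

end
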